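(* Let $\mathbf b=(b_1,b_2)\in\mathbb N^2$ with $\gcd(b_1,b_2)=1$ and $b_1\le b_2$, let $r\ge1$ and $\boldsymbol\alpha=(\alpha_1,\dots,\alpha_r)\in(0,1)^r$. With $\overline R(n)$ as below, for every $\varepsilon>0$, as $n\to\infty$, $$\mathbb E\big(\overline R(n)\big)=\prod_p\Big(1-\frac1{p^{b_1}}+\frac1{p^{b_1}}\Big(1-\frac1{p^{b_2}}\Big)^r\Big)+O\big(n^{-1/2+\varepsilon}\big),$$ where $p$ runs over all primes and the implied constant depends on $\boldsymbol\alpha,\mathbf b,r,\varepsilon$.
   Context: $\mathbf b$-visibility: given two distinct lattice points $P=(p_1,p_2)$, $Q=(q_1,q_2)\in\mathbb Z^2$, they determine a curve through both of the form $a_1(y-q_2)^{b_1}=a_2(x-q_1)^{b_2}$ for some $(a_1,a_2)\in\mathbb Q^2\setminus\{(0,0)\}$; $P$ is $\mathbf b$-visible from $Q$ if no other lattice point lies on the segment of this curve between $P$ and $Q$; a point $P\ne(0,0)$ is $\mathbf b$-visible if it is $\mathbf b$-visible from the origin. For $1\le j\le r$, $(P^{(j)}_i)_{i\ge0}$ is an $\alpha_j$-random walk ($P^{(j)}_0=(0,0)$, $P^{(j)}_{i+1}=P^{(j)}_i+(1,0)$ with probability $\alpha_j$ and $+(0,1)$ with probability $1-\alpha_j$, independently), the $r$ walks being mutually independent. $Y_i=1$ if all $P^{(j)}_i$, $1\le j\le r$, are $\mathbf b$-visible, $Y_i=0$ otherwise; $\overline R(n)=\frac1n\sum_{i=1}^nY_i$.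 *)

theory Defs
  imports "HOL-Probability.Probability" "HOL-Library.Landau_Symbols"
begin

text \<open>The curve through P and Q: a1 (y - q2)^b1 = a2 (x - q1)^b2 with (a1,a2) rational, not both 0.
  The segment of the curve between P and Q consists of the curve points lying in the closed
  coordinate box spanned by P and Q (on that box the curve is a single monotone arc).\<close>
definition on_curve :: "nat \<Rightarrow> nat \<Rightarrow> rat \<Rightarrow> rat \<Rightarrow> int \<times> int \<Rightarrow> int \<times> int \<Rightarrow> bool" where
  "on_curve b1 b2 a1 a2 Q R \<longleftrightarrow>
     a1 * of_int (snd R - snd Q) ^ b1 = a2 * of_int (fst R - fst Q) ^ b2"

definition in_box :: "int \<times> int \<Rightarrow> int \<times> int \<Rightarrow> int \<times> int \<Rightarrow> bool" where
  "in_box P Q R \<longleftrightarrow>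
     min (fst P) (fst Q) \<le> fst R \<and> fst R \<le> max (fst P) (fst Q) \<and>
     min (snd P) (snd Q) \<le> snd R \<and> snd R \<le> max (snd P) (snd Q)"

definition b_visible_from :: "nat \<Rightarrow> nat \<Rightarrow> int \<times> int \<Rightarrow> int \<times> int \<Rightarrow> bool" where
  "b_visible_from b1 b2 P Q \<longleftrightarrow> P \<noteq> Q \<and>
     (\<exists>a1 a2. (a1, a2) \<noteq> (0, 0) \<and> on_curve b1 b2 a1 a2 Q P \<and>
        (\<forall>R. on_curve b1 b2 a1 a2 Q R \<and> in_box P Q R \<longrightarrow> R = P \<or> R = Q))"

definition b_visible :: "nat \<Rightarrow> nat \<Rightarrow> int \<times> int \<Rightarrow> bool" where
  "b_visible b1 b2 P \<longleftrightarrow> P \<noteq> (0, 0) \<and> b_visible_from b1 b2 P (0, 0)"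

text \<open>Steps of the r walks (indices j < r, times k < n): True = step (1,0), False = step (0,1).
  The joint law of the first n steps of the r independent alpha_j-random walks.\<close>
definition walks_pmf :: "(nat \<Rightarrow> real) \<Rightarrow> nat \<Rightarrow> nat \<Rightarrow> (nat \<times> nat \<Rightarrow> bool) pmf" where
  "walks_pmf \<alpha> r n = Pi_pmf ({..<r} \<times> {..<n}) False (\<lambda>(j, k). bernoulli_pmf (\<alpha> j))"

definition walk_pos :: "(nat \<times> nat \<Rightarrow> bool) \<Rightarrow> nat \<Rightarrow> nat \<Rightarrow> int \<times> int" where
  "walk_pos \<omega> j i = (int (card {k. k < i \<and> \<omega> (j, k)}), int (card {k. k < i \<and> \<not> \<omega> (j, k)}))"

definition Y :: "nat \<Rightarrow> nat \<Rightarrow> nat \<Rightarrow> (nat \<times> nat \<Rightarrow> bool) \<Rightarrow> nat \<Rightarrow> real" where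
  "Y b1 b2 r \<omega> i = (if \<forall>j<r. b_visible b1 b2 (walk_pos \<omega> j i) then 1 else 0)"

definition Rbar :: "nat \<Rightarrow> nat \<Rightarrow> nat \<Rightarrow> nat \<Rightarrow> (nat \<times> nat \<Rightarrow> bool) \<Rightarrow> real" where
  "Rbar b1 b2 r n \<omega> = (1 / real n) * (\<Sum>i=1..n. Y b1 b2 r \<omega> i)"

end

theory Submission
  imports Defs
begin

(* For coprime b1 <= b2, a lattice point (x, y) with x, y > 0 is b-visible iff no prime p has
   p^b1 dividing x and p^b2 dividing y. After i steps a walk sits at (X, i - X) with X binomial,
   so visibility means: p^b2 does not divide i - X for every prime p with p^b1 dividing i.
   Inclusion-exclusion over sets of such primes reduces this to the probability that X lies in a
   fixed residue class modulo (prod S)^b2. Since X and X + 1 are O(1/sqrt i) apart in total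
   variation, every residue class modulo m has probability 1/m + O(1/sqrt i). Hence E(Y_i) is
   g(i) = prod_{p^b1 | i} (1 - p^-b2)^r up to O(2^omega(i) / sqrt i), where 2^omega(i) = O(i^eps).
   Averaging g(i) over i <= n gives the partial Euler product up to O(n^-1/2), and the tail of
   the Euler product is O(1/n). *)

lemma prod_if_all:
  "finite S \<Longrightarrow> (\<Prod>x\<in>S. if P x then f x else 0) = (if \<forall>x\<in>S. P x then prod f S else (0::'a::comm_semiring_1))"
  by (induction S rule: finite_induct) auto

lemma prod_one_minus_eq_sum_Pow:
  fixes f :: "'a \<Rightarrow> real"
  assumes "finite A"
  shows "(\<Prod>p\<in>A. 1 - f p) = (\<Sum>S\<in>Pow A. (-1) ^ card S * (\<Prod>p\<in>S. f p))"
proof -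
  have "(\<Prod>p\<in>A. 1 - f p) = (\<Prod>p\<in>A. - f p + 1)"
    by simp
  also have "\<dots> = (\<Sum>S\<in>Pow A. (\<Prod>p\<in>S. - f p) * (\<Prod>p\<in>A - S. 1))"
    using assms by (rule prod_add)
  finally show ?thesis
    by (simp add: prod_uminus)
qed

lemma prime_powers_dvd_iff_prod_dvd:
  fixes S :: "nat set"
  assumes "finite S" "\<forall>p\<in>S. prime p"
  shows "(\<forall>p\<in>S. p ^ b dvd m) \<longleftrightarrow> (\<Prod>S) ^ b dvd m"
  using assms
proof (induction S rule: finite_induct)
  case (insert p F)
  have "coprime p (\<Prod>F)"
    using insert by (intro prod_coprime_right) (metis insertCI primes_coprime)
  then have "coprime (p ^ b) ((\<Prod>F) ^ b)"
    by simp
  then show ?case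
    using insert by (auto simp: power_mult_distrib divides_mult
        intro: dvd_trans[OF mult_dvd_mono[OF dvd_refl dvd_triv_right]]
        dest: dvd_mult_left dvd_mult_right)
qed simp

lemma power_dvd_imp_le:
  fixes p i :: nat
  assumes "b \<ge> 1" "i > 0" "p ^ b dvd i"
  shows "p \<le> i"
proof -
  have "p dvd p ^ b"
    using assms by (intro dvd_power) auto
  then have "p dvd i"
    using assms(3) by (rule dvd_trans)
  then show ?thesis
    using assms(2) by (rule dvd_imp_le)
qed

lemma finite_prime_power_divisors:
  assumes "b \<ge> 1" "i \<ge> (1::nat)"
  shows "finite {p. prime p \<and> p ^ b dvd i}"
proof (rule finite_subset)
  show "{p. prime p \<and> p ^ b dvd i} \<subseteq> {..i}"
    using power_dvd_imp_le[OF assms(1)] assms(2) by auto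
qed simp

lemma indicator_no_prime_power_dvd_expand:
  fixes A :: "nat set"
  assumes "finite A" "\<forall>p\<in>A. prime p"
  shows "(if \<forall>p\<in>A. \<not> p ^ b dvd y then 1 else 0 :: real) =
         (\<Sum>S\<in>Pow A. (-1) ^ card S * (if (\<Prod>S) ^ b dvd y then 1 else 0))"
proof -
  have "(\<Prod>p\<in>A. 1 - (if p ^ b dvd y then 1 else 0)) = (\<Prod>p\<in>A. if \<not> p ^ b dvd y then 1 else (0::real))"
    by (intro prod.cong) auto
  then have "(if \<forall>p\<in>A. \<not> p ^ b dvd y then 1 else 0 :: real) = (\<Prod>p\<in>A. 1 - (if p ^ b dvd y then 1 else 0))"
    using prod_if_all[OF assms(1), of "\<lambda>p. \<not> p ^ b dvd y" "\<lambda>_. 1 :: real"] by simp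
  also have "\<dots> = (\<Sum>S\<in>Pow A. (-1) ^ card S * (\<Prod>p\<in>S. if p ^ b dvd y then 1 else 0))"
    using assms(1) by (rule prod_one_minus_eq_sum_Pow)
  also have "\<dots> = (\<Sum>S\<in>Pow A. (-1) ^ card S * (if (\<Prod>S) ^ b dvd y then 1 else 0))"
  proof (rule sum.cong[OF refl])
    fix S assume "S \<in> Pow A"
    then have S: "finite S" "\<forall>p\<in>S. prime p"
      using assms by (auto intro: finite_subset)
    have "(\<Prod>p\<in>S. if p ^ b dvd y then 1 else (0::real)) = (if \<forall>p\<in>S. p ^ b dvd y then 1 else 0)"
      using prod_if_all[OF S(1), of "\<lambda>p. p ^ b dvd y" "\<lambda>_. 1 :: real"] by simp
    then show "(-1) ^ card S * (\<Prod>p\<in>S. if p ^ b dvd y then 1 else 0) = (-1) ^ card S * (if (\<Prod>S) ^ b dvd y then 1 else (0::real))"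
      using prime_powers_dvd_iff_prod_dvd[OF S, of b y] by simp
  qed
  finally show ?thesis .
qed

lemma prod_one_minus_inverse_power_expand:
  fixes A :: "nat set"
  assumes "finite A"
  shows "(\<Prod>p\<in>A. 1 - 1 / real p ^ b) = (\<Sum>S\<in>Pow A. (-1) ^ card S * (1 / real ((\<Prod>S) ^ b)))"
  using prod_one_minus_eq_sum_Pow[OF assms, of "\<lambda>p. 1 / real p ^ b"]
  by (simp add: prod_dividef of_nat_prod prod_power_distrib)

lemma card_multiples_atLeastAtMost:
  assumes "d \<ge> (1::nat)"
  shows "card {i\<in>{1..n}. d dvd i} = n div d"
proof -
  have "{i\<in>{1..n}. d dvd i} = (\<lambda>k. d * k) ` {1..n div d}"
  proof (intro equalityI subsetI)
    fix i assume i: "i \<in> {i\<in>{1..n}. d dvd i}"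
    then obtain k where k: "i = d * k"
      by (auto elim: dvdE)
    have "k \<ge> 1"
      using i k by (cases k) auto
    moreover have "k \<le> n div d"
      using i k assms by (simp add: less_eq_div_iff_mult_less_eq mult.commute)
    ultimately show "i \<in> (\<lambda>k. d * k) ` {1..n div d}"
      using k by auto
  next
    fix i assume "i \<in> (\<lambda>k. d * k) ` {1..n div d}"
    then obtain k where k: "i = d * k" "1 \<le> k" "k \<le> n div d"
      by (elim imageE) auto
    then have "d * k \<le> n" "d * k \<ge> 1"
      using assms by (simp_all add: less_eq_div_iff_mult_less_eq mult.commute)
    then show "i \<in> {i\<in>{1..n}. d dvd i}"
      using k by auto
  qed
  moreover have "inj_on (\<lambda>k. d * k) {1..n div d}"
    using assms by (auto simp: inj_on_def)
  ultimately show ?thesis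
    by (simp add: card_image)
qed

lemma card_below_le_ceiling:
  fixes S :: "nat set"
  shows "card {p\<in>S. real p < M} \<le> nat \<lceil>M\<rceil>"
proof -
  have "{p\<in>S. real p < M} \<subseteq> {..<nat \<lceil>M\<rceil>}"
    by (auto simp: less_ceiling_iff zless_nat_eq_int_zless)
  then show ?thesis
    using card_mono[of "{..<nat \<lceil>M\<rceil>}"] by fastforce
qed

text \<open>Every \<open>p \<ge> 2 powr (1/e)\<close> satisfies \<open>2 \<le> p powr e\<close>; the fewer than \<open>\<lceil>2 powr (1/e)\<rceil>\<close>
  smaller elements are paid for by the constant.\<close>

lemma two_pow_card_le_powr:
  fixes S :: "nat set"
  assumes "finite S" "\<forall>p\<in>S. p > 0" "\<Prod>S \<le> N" "e > 0"
  shows "2 ^ card S \<le> 2 ^ nat \<lceil>2 powr (1/e)\<rceil> * real N powr e"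
proof -
  define M where "M = 2 powr (1/e)"
  define w where "w p = (if real p < M then 2 else 1 :: real)" for p :: nat
  have "2 \<le> w p * real p powr e" if "p \<in> S" for p
  proof (cases "real p < M")
    case True
    have "1 \<le> real p powr e"
      using assms that by (intro ge_one_powr_ge_zero) (auto simp: Suc_le_eq)
    then show ?thesis
      using True unfolding w_def by simp
  next
    case False
    then have "M powr e \<le> real p powr e"
      using assms unfolding M_def by (intro powr_mono2) auto
    moreover have "M powr e = 2"
      unfolding M_def using assms by (simp add: powr_powr)
    ultimately show ?thesis
      using False unfolding w_def by simp
  qed
  then have "(2::real) ^ card S \<le> (\<Prod>p\<in>S. w p * real p powr e)"
    using prod_mono[of S "\<lambda>_. 2::real"] by simp
  also have "\<dots> = (\<Prod>p\<in>S. w p) * real (\<Prod>S) powr e"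
    by (simp add: prod.distrib prod_powr_distrib)
  also have "\<dots> \<le> 2 ^ nat \<lceil>M\<rceil> * real N powr e"
  proof (rule mult_mono)
    have "(\<Prod>p\<in>S. w p) = 2 ^ card {p\<in>S. real p < M}"
      unfolding w_def using assms by (subst prod.inter_filter[symmetric]) auto
    also have "\<dots> \<le> 2 ^ nat \<lceil>M\<rceil>"
      by (intro power_increasing card_below_le_ceiling) simp
    finally show "(\<Prod>p\<in>S. w p) \<le> 2 ^ nat \<lceil>M\<rceil>" .
    have "real (\<Prod>S) \<le> real N"
      using assms(3) by (simp only: of_nat_le_iff)
    then show "real (\<Prod>S) powr e \<le> real N powr e"
      using assms(4) by (intro powr_mono2) (auto simp: prod_nonneg)
  qed (auto simp: w_def intro: prod_nonneg)
  finally show ?thesis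
    unfolding M_def by simp
qed

lemma two_pow_card_prime_power_divisors_le:
  assumes "b1 \<ge> 1" "1 \<le> i" "i \<le> n" "e > 0"
  shows "2 ^ card {p. prime p \<and> p ^ b1 dvd i} \<le> 2 ^ nat \<lceil>2 powr (1 / e)\<rceil> * real n powr e"
proof (rule two_pow_card_le_powr[OF finite_prime_power_divisors[OF assms(1,2)] _ _ assms(4)])
  let ?A = "{p. prime p \<and> p ^ b1 dvd i}"
  show "\<forall>p\<in>?A. p > 0"
    by (simp add: prime_gt_0_nat)
  have "\<forall>p\<in>?A. p ^ 1 dvd i"
    using assms(1) by (auto intro: dvd_trans[OF dvd_power])
  then have "\<Prod>?A dvd i"
    using prime_powers_dvd_iff_prod_dvd[OF finite_prime_power_divisors[OF assms(1,2)], of 1 i] by simp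
  then show "\<Prod>?A \<le> n"
    using assms by (meson dvd_imp_le le_trans less_le_trans zero_less_one)
qed

lemma abs_div_le_amgm:
  fixes X Y t :: real
  assumes "Y > 0" "t > 0"
  shows "\<bar>X\<bar> / Y \<le> (t * X ^ 2 + 1 / (t * Y ^ 2)) / 2"
proof -
  have "0 \<le> (t * \<bar>X\<bar> * Y - 1) ^ 2"
    by simp
  then have "2 * t * \<bar>X\<bar> * Y \<le> t ^ 2 * X ^ 2 * Y ^ 2 + 1"
    by (simp add: power2_eq_square algebra_simps)
  then show ?thesis
    using assms by (simp add: field_simps power2_eq_square)
qed

lemma power_le_inverse_sqrt:
  assumes "0 < g" "g < 1" "i \<ge> 1"
  shows "g ^ i \<le> 1 / ((1 - g) * sqrt (real i))"
proof -
  have "real i * g ^ i \<le> (\<Sum>k<i. g ^ k)"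
    using sum_mono[of "{..<i}" "\<lambda>_. g ^ i" "\<lambda>k. g ^ k"] assms by (simp add: power_decreasing)
  then have "(1 - g) * (real i * g ^ i) \<le> 1 - g ^ i"
    using assms by (simp add: one_diff_power_eq mult_left_mono)
  also have "\<dots> \<le> 1"
    using assms by simp
  finally have "(1 - g) * real i * g ^ i \<le> 1"
    by (simp add: ac_simps)
  moreover have "sqrt (real i) \<le> real i"
    using assms by (simp add: real_sqrt_le_iff' power2_eq_square)
  then have "(1 - g) * sqrt (real i) * g ^ i \<le> (1 - g) * real i * g ^ i"
    using assms by (intro mult_right_mono mult_left_mono) auto
  ultimately show ?thesis
    using assms by (simp add: field_simps)
qed

lemma abs_div_div_minus_inverse_le:
  assumes "n \<ge> (1::nat)" "d \<ge> (1::nat)"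
  shows "\<bar>real (n div d) / real n - 1 / real d\<bar> \<le> 1 / (sqrt (real n) * sqrt (real d))"
proof -
  define t where "t = real (n mod d) / (real d * real n)"
  have "real d * real (n div d) + real (n mod d) = real n"
    by (metis of_nat_add of_nat_mult mult_div_mod_eq)
  then have eq: "1 / real d - real (n div d) / real n = t"
    unfolding t_def using assms by (simp add: field_simps)
  have "real (n mod d) \<le> real d"
    using assms by (simp add: less_imp_le)
  then have "t \<le> real d / (real d * real n)"
    unfolding t_def by (rule divide_right_mono) simp
  moreover have "t \<le> real n / (real d * real n)"
    unfolding t_def by (rule divide_right_mono) simp_all
  ultimately have "t \<le> 1 / real n" "t \<le> 1 / real d"
    using assms by simp_all
  moreover have "0 \<le> t"
    unfolding t_def by simp
  ultimately have "t * t \<le> (1 / real n) * (1 / real d)"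
    by (intro mult_mono) auto
  then have "t \<le> sqrt ((1 / real n) * (1 / real d))"
    by (intro real_le_rsqrt) (simp add: power2_eq_square)
  also have "\<dots> = 1 / (sqrt (real n) * sqrt (real d))"
    by (simp add: real_sqrt_mult real_sqrt_divide)
  finally show ?thesis
    using eq \<open>0 \<le> t\<close> by (simp add: abs_minus_commute)
qed

lemma real_sqrt_prod:
  fixes f :: "'a \<Rightarrow> real"
  shows "(\<And>x. x \<in> S \<Longrightarrow> f x \<ge> 0) \<Longrightarrow> sqrt (\<Prod>x\<in>S. f x) = (\<Prod>x\<in>S. sqrt (f x))"
  by (induction S rule: infinite_finite_induct) (auto simp: real_sqrt_mult)

lemma inverse_pow_mult_sqrt_le:
  assumes "p \<ge> (1::nat)" "b1 \<ge> 1" "b2 \<ge> 1"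
  shows "1 / (real p ^ b2 * sqrt (real p ^ b1)) \<le> real p powr (-3/2)"
proof -
  have "real p \<le> real p ^ b2" "sqrt (real p) \<le> sqrt (real p ^ b1)"
    using assms by (simp_all add: self_le_power)
  then have "real p * sqrt (real p) \<le> real p ^ b2 * sqrt (real p ^ b1)"
    by (intro mult_mono) auto
  moreover have "real p * sqrt (real p) = real p powr (3/2)"
    using assms powr_add[of "real p" 1 "1/2"] by (simp add: powr_half_sqrt)
  ultimately have "1 / (real p ^ b2 * sqrt (real p ^ b1)) \<le> 1 / real p powr (3/2)"
    using assms by (intro divide_left_mono) auto
  then show ?thesis
    using assms by (simp add: powr_minus_divide)
qed

lemma sum_inverse_squares_le:
  assumes "n \<ge> 1" "N \<ge> n"
  shows "(\<Sum>m\<in>{n<..N}. 1 / real m ^ 2) \<le> 1 / real n - 1 / real N"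
  using assms(2)
proof (induction N rule: dec_induct)
  case (step N)
  have "real N \<ge> 1"
    using step assms by simp
  then have "1 / real (Suc N) ^ 2 \<le> 1 / (real N * real (Suc N))"
    by (intro divide_left_mono) (auto simp: power2_eq_square)
  also have "\<dots> = 1 / real N - 1 / real (Suc N)"
    using \<open>real N \<ge> 1\<close> by (simp add: field_simps)
  finally have "1 / real (Suc N) ^ 2 \<le> 1 / real N - 1 / real (Suc N)" .
  moreover have "{n<..Suc N} = insert (Suc N) {n<..N}"
    using step by auto
  ultimately show ?case
    using step.IH by simp
qed simp

lemma sqrt_plus_inverse_sqrt_Suc_le: "2 * sqrt (real n) + 1 / sqrt (real (Suc n)) \<le> 2 * sqrt (real (Suc n))"
proof -
  have "sqrt (real n) * sqrt (real (Suc n)) = sqrt (real n * real (Suc n))"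
    by (simp add: real_sqrt_mult)
  also have "\<dots> \<le> sqrt ((real n + 1/2) ^ 2)"
    by (intro real_sqrt_le_mono) (simp add: power2_eq_square algebra_simps)
  finally have "sqrt (real n) * sqrt (real (Suc n)) \<le> real n + 1/2"
    by simp
  have "(2 * sqrt (real n) + 1 / sqrt (real (Suc n))) * sqrt (real (Suc n)) =
          2 * (sqrt (real n) * sqrt (real (Suc n))) + 1"
    by (simp add: field_simps)
  also have "\<dots> \<le> 2 * (real n + 1/2) + 1"
    using \<open>sqrt (real n) * sqrt (real (Suc n)) \<le> real n + 1/2\<close> by simp
  also have "\<dots> = (2 * sqrt (real (Suc n))) * sqrt (real (Suc n))"
    by (simp only: mult.assoc real_sqrt_mult_self) simp
  finally show ?thesis
    by (simp add: mult_le_cancel_right)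
qed

lemma sum_inverse_sqrt_le: "(\<Sum>i=1..n. 1 / sqrt (real i)) \<le> 2 * sqrt (real n)"
proof (induction n)
  case (Suc n)
  then show ?case
    using sqrt_plus_inverse_sqrt_Suc_le[of n] by simp
qed simp

lemma inverse_sqrt_le_powr:
  assumes "n \<ge> 1" "e > 0"
  shows "1 / sqrt (real n) \<le> real n powr (-1/2 + e)"
proof -
  have "1 / sqrt (real n) = real n powr (-1/2)"
    using assms by (simp add: powr_half_sqrt[symmetric] powr_minus_divide)
  also have "\<dots> \<le> real n powr (-1/2 + e)"
    using assms by (intro powr_mono) auto
  finally show ?thesis .
qed

lemma inverse_le_powr:
  assumes "n \<ge> 1" "e > 0"
  shows "1 / real n \<le> real n powr (-1/2 + e)"
proof -
  have "sqrt (real n) \<le> real n"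
    using assms by (simp add: real_sqrt_le_iff' power2_eq_square)
  then have "1 / real n \<le> 1 / sqrt (real n)"
    using assms by (intro divide_left_mono) auto
  then show ?thesis
    using inverse_sqrt_le_powr[OF assms] by linarith
qed

lemma powr_mult_sqrt_div:
  assumes "n \<ge> 1"
  shows "real n powr e * (2 * sqrt (real n)) / real n = 2 * real n powr (-1/2 + e)"
proof -
  have "real n powr e * sqrt (real n) = real n powr (e + 1/2)"
    using assms by (simp add: powr_add powr_half_sqrt)
  moreover have "real n powr (e + 1/2) / real n = real n powr (-1/2 + e)"
    using assms powr_diff[of "real n" "e + 1/2" 1] by simp
  ultimately show ?thesis
    by (metis mult.left_commute times_divide_eq_right)
qed

section \<open>Visibility as a divisibility condition\<close>

lemma rat_common_root:
  fixes A B :: rat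
  assumes "A > 0" "B > 0" "B ^ b1 = A ^ b2" "coprime b1 b2"
  obtains s where "s > 0" "A = s ^ b1" "B = s ^ b2"
proof -
  obtain u v where uv: "u * int b1 + v * int b2 = 1"
    using bezout_int[of "int b1" "int b2"] assms(4)
    by (auto simp: coprime_iff_gcd_eq_1 gcd_int_def)
  define s where "s = A powi u * B powi v"
  have eq: "B powi (k * int b1) = A powi (k * int b2)" for k
    by (metis assms(3) mult.commute power_int_mult power_int_of_nat)
  have "s ^ b1 = A powi (u * int b1) * B powi (v * int b1)"
    unfolding s_def power_int_of_nat[symmetric] power_int_mult_distrib
    by (simp add: power_int_mult mult.commute)
  also have "\<dots> = A powi (u * int b1 + v * int b2)"
    using assms(1) by (simp add: eq power_int_add)
  finally have "A = s ^ b1"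
    using uv by simp
  moreover have "s ^ b2 = A powi (u * int b2) * B powi (v * int b2)"
    unfolding s_def power_int_of_nat[symmetric] power_int_mult_distrib
    by (simp add: power_int_mult mult.commute)
  then have "s ^ b2 = B powi (u * int b1 + v * int b2)"
    using assms(2) by (simp add: eq[symmetric] power_int_add)
  then have "B = s ^ b2"
    using uv by simp
  moreover have "s > 0"
    unfolding s_def using assms by simp
  ultimately show ?thesis
    using that by blast
qed

lemma pos_rat_coprime_fraction:
  fixes s :: rat
  assumes "s > 0"
  obtains c d :: nat where "c > 0" "d > 0" "coprime c d" "s = of_nat c / of_nat d"
proof -
  obtain c d where q: "quotient_of s = (c, d)"
    by fastforce
  then have "d > 0" "coprime c d" "s = of_int c / of_int d"
    using quotient_of_denom_pos quotient_of_coprime quotient_of_div by blast+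
  moreover from this have "c > 0"
    using assms by (simp add: zero_less_divide_iff)
  moreover from calculation have "coprime (nat c) (nat d)"
    by (simp add: coprime_int_iff[symmetric])
  ultimately show ?thesis
    using that[of "nat c" "nat d"] by simp
qed

lemma ratio_eq_power_fraction:
  fixes u x c d :: nat
  assumes "x > 0" "d > 0" "coprime c d" "of_nat u / of_nat x = (of_nat c / of_nat d :: rat) ^ k"
  shows "u * d ^ k = x * c ^ k" "d ^ k dvd x"
proof -
  have "of_nat (u * d ^ k) = (of_nat (x * c ^ k) :: rat)"
    using assms by (simp add: power_divide field_simps)
  then show "u * d ^ k = x * c ^ k"
    by (simp only: of_nat_eq_iff)
  then have "d ^ k dvd x * c ^ k"
    by (metis dvd_triv_right)
  moreover have "coprime (d ^ k) (c ^ k)"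
    using assms(3) by (simp add: coprime_commute)
  ultimately show "d ^ k dvd x"
    using coprime_dvd_mult_left_iff by blast
qed

text \<open>The ratios \<open>u/x\<close> and \<open>v/y\<close> are the \<open>b1\<close>-th and \<open>b2\<close>-th powers of one rational
  \<open>c/d\<close>; then \<open>d^b1\<close> divides \<open>x\<close> and \<open>d^b2\<close> divides \<open>y\<close>, which forces \<open>d = 1\<close>, and
  \<open>u \<le> x\<close> forces \<open>c = 1\<close>.\<close>

lemma curve_point_in_box_eq_endpoint:
  fixes u v x y :: nat
  assumes "b1 \<ge> 1" "coprime b1 b2"
    and no_pair: "\<forall>p. prime p \<longrightarrow> \<not> (p ^ b1 dvd x \<and> p ^ b2 dvd y)"
    and "0 < u" "u \<le> x" "0 < v" "0 < y"
    and curve: "x ^ b2 * v ^ b1 = y ^ b1 * u ^ b2"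
  shows "u = x \<and> v = y"
proof -
  have "0 < x"
    using assms by simp
  have ratio: "(of_nat v / of_nat y) ^ b1 = (of_nat u / of_nat x :: rat) ^ b2"
    using arg_cong[OF curve, of "of_nat :: nat \<Rightarrow> rat"] \<open>0 < x\<close> \<open>0 < y\<close>
    by (simp add: power_divide field_simps)
  obtain s :: rat where "s > 0" and sA: "of_nat u / of_nat x = s ^ b1" and sB: "of_nat v / of_nat y = s ^ b2"
    by (rule rat_common_root[OF _ _ ratio assms(2)]) (use assms \<open>0 < x\<close> in simp_all)
  obtain c d :: nat where "c > 0" "d > 0" "coprime c d" and s: "s = of_nat c / of_nat d"
    using pos_rat_coprime_fraction[OF \<open>s > 0\<close>] by blast
  have ux: "u * d ^ b1 = x * c ^ b1" "d ^ b1 dvd x"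
    using ratio_eq_power_fraction[OF \<open>0 < x\<close> \<open>d > 0\<close> \<open>coprime c d\<close>] sA unfolding s by blast+
  have vy: "v * d ^ b2 = y * c ^ b2" "d ^ b2 dvd y"
    using ratio_eq_power_fraction[OF \<open>0 < y\<close> \<open>d > 0\<close> \<open>coprime c d\<close>] sB unfolding s by blast+
  have "d = 1"
  proof (rule ccontr)
    assume "d \<noteq> 1"
    then obtain p where "prime p" "p dvd d"
      using prime_factor_nat by blast
    then have "p ^ b1 dvd x" "p ^ b2 dvd y"
      using ux(2) vy(2) by (meson dvd_power_same dvd_trans)+
    then show False
      using no_pair \<open>prime p\<close> by blast
  qed
  then have "c ^ b1 \<le> 1"
    using ux \<open>u \<le> x\<close> \<open>0 < x\<close> by simp
  moreover have "c \<le> c ^ b1"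
    using \<open>c > 0\<close> \<open>b1 \<ge> 1\<close> by (simp add: self_le_power)
  ultimately have "c = 1"
    using \<open>c > 0\<close> by linarith
  then show ?thesis
    using ux vy \<open>d = 1\<close> by simp
qed

lemma b_visible_imp_no_common_prime_power:
  fixes x y :: nat
  assumes "b1 \<ge> 1" "x > 0" "prime p" and vis: "b_visible b1 b2 (int x, int y)"
  shows "\<not> (p ^ b1 dvd x \<and> p ^ b2 dvd y)"
proof
  assume "p ^ b1 dvd x \<and> p ^ b2 dvd y"
  then obtain u v where u: "x = p ^ b1 * u" and v: "y = p ^ b2 * v"
    by (elim conjE dvdE) blast
  obtain a1 a2 where curve: "on_curve b1 b2 a1 a2 (0, 0) (int x, int y)"
    and between: "\<And>R. on_curve b1 b2 a1 a2 (0, 0) R \<Longrightarrow> in_box (int x, int y) (0, 0) R \<Longrightarrow>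
                    R = (int x, int y) \<or> R = (0, 0)"
    using vis unfolding b_visible_def b_visible_from_def by blast
  have "(of_nat p :: rat) ^ (b1 * b2) * (a1 * of_nat v ^ b1) = of_nat p ^ (b1 * b2) * (a2 * of_nat u ^ b2)"
    using curve unfolding on_curve_def u v by (simp add: power_mult_distrib power_mult[symmetric] ac_simps)
  then have "on_curve b1 b2 a1 a2 (0, 0) (int u, int v)"
    using \<open>prime p\<close> unfolding on_curve_def by (simp add: prime_gt_0_nat)
  moreover have "p ^ b1 \<ge> 2"
    using \<open>prime p\<close> \<open>b1 \<ge> 1\<close> prime_ge_2_nat by (metis le_trans power_increasing_iff power_one_right not_one_le_zero prime_gt_1_nat self_le_power)
  then have "0 < u" "u < x" "v \<le> y"
    using \<open>x > 0\<close> \<open>prime p\<close> u v by (auto simp: prime_gt_0_nat Suc_le_eq)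
  ultimately show False
    using between[of "(int u, int v)"] unfolding in_box_def by auto
qed

lemma no_common_prime_power_imp_b_visible:
  fixes x y :: nat
  assumes "b1 \<ge> 1" "b2 \<ge> 1" "coprime b1 b2" "x > 0" "y > 0"
    and no_pair: "\<forall>p. prime p \<longrightarrow> \<not> (p ^ b1 dvd x \<and> p ^ b2 dvd y)"
  shows "b_visible b1 b2 (int x, int y)"
proof -
  define a1 :: rat where "a1 = of_nat x ^ b2"
  define a2 :: rat where "a2 = of_nat y ^ b1"
  have "R = (int x, int y) \<or> R = (0, 0)"
    if R: "on_curve b1 b2 a1 a2 (0, 0) R" "in_box (int x, int y) (0, 0) R" for R
  proof -
    obtain u v where uv: "R = (int u, int v)" "u \<le> x" "v \<le> y"
    proof -
      obtain U V where UV: "R = (U, V)"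
        by fastforce
      with R(2) have "0 \<le> U" "U \<le> int x" "0 \<le> V" "V \<le> int y"
        unfolding in_box_def by auto
      then show ?thesis
        using that[of "nat U" "nat V"] UV by simp
    qed
    have "of_nat (x ^ b2 * v ^ b1) = (of_nat (y ^ b1 * u ^ b2) :: rat)"
      using R(1) unfolding on_curve_def a1_def a2_def uv by simp
    then have curve: "x ^ b2 * v ^ b1 = y ^ b1 * u ^ b2"
      by (simp only: of_nat_eq_iff)
    show ?thesis
    proof (cases "u = 0 \<or> v = 0")
      case True
      then have "u = 0 \<and> v = 0"
        using curve assms by (auto simp: zero_power)
      then show ?thesis
        using uv by simp
    next
      case False
      then show ?thesis
        using curve_point_in_box_eq_endpoint[OF assms(1,3) no_pair _ _ _ \<open>y > 0\<close> curve] uv by simp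
    qed
  qed
  moreover have "(a1, a2) \<noteq> (0, 0)" "on_curve b1 b2 a1 a2 (0, 0) (int x, int y)"
    using \<open>x > 0\<close> unfolding a1_def a2_def on_curve_def by simp_all
  ultimately show ?thesis
    using \<open>x > 0\<close> unfolding b_visible_def b_visible_from_def by auto
qed

lemma b_visible_iff_no_common_prime_power:
  fixes x y :: nat
  assumes "b1 \<ge> 1" "b2 \<ge> 1" "coprime b1 b2" "x > 0" "y > 0"
  shows "b_visible b1 b2 (int x, int y) \<longleftrightarrow> (\<forall>p. prime p \<longrightarrow> \<not> (p ^ b1 dvd x \<and> p ^ b2 dvd y))"
  using b_visible_imp_no_common_prime_power no_common_prime_power_imp_b_visible assms by blast

lemma b_visible_walk_point_iff:
  assumes "b1 \<ge> 1" "coprime b1 b2" "b1 \<le> b2" "0 < k" "k < i"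
  shows "b_visible b1 b2 (int k, int (i - k)) \<longleftrightarrow>
           (\<forall>p\<in>{p. prime p \<and> p ^ b1 dvd i}. \<not> p ^ b2 dvd (i - k))"
proof -
  have "p ^ b1 dvd k \<longleftrightarrow> p ^ b1 dvd i" if "p ^ b2 dvd (i - k)" for p :: nat
  proof -
    have "p ^ b1 dvd i - k"
      using that le_imp_power_dvd[OF \<open>b1 \<le> b2\<close>] dvd_trans by blast
    then show ?thesis
      using \<open>k < i\<close> dvd_add_left_iff[of "p ^ b1" "i - k" k] by simp
  qed
  then show ?thesis
    using assms b_visible_iff_no_common_prime_power[of b1 b2 k "i - k"] by auto
qed

section \<open>Independence of the walks\<close>

lemma Pi_pmf_Times:
  fixes p :: "'a \<Rightarrow> 'b \<Rightarrow> 'c pmf"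
  assumes J: "finite J" and K: "finite K"
  shows "Pi_pmf (J \<times> K) d (\<lambda>(j, k). p j k) =
         map_pmf (\<lambda>F (j, k). if j \<in> J then F j k else d) (Pi_pmf J (\<lambda>_. d) (\<lambda>j. Pi_pmf K d (p j)))"
    (is "?L = map_pmf ?\<Phi> ?M")
proof (rule pmf_eqI)
  fix \<omega> :: "'a \<times> 'b \<Rightarrow> 'c"
  have supp: "j \<notin> J \<Longrightarrow> H j = (\<lambda>_. d)" "j \<in> J \<Longrightarrow> k \<notin> K \<Longrightarrow> H j k = d"
    if "H \<in> set_pmf ?M" for H j k
    using that set_Pi_pmf_subset[OF K, of d "p j"] unfolding set_Pi_pmf[OF J] PiE_dflt_def by auto
  show "pmf ?L \<omega> = pmf (map_pmf ?\<Phi> ?M) \<omega>"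
  proof (cases "\<forall>x. x \<notin> J \<times> K \<longrightarrow> \<omega> x = d")
    case True
    define G where "G j = (if j \<in> J then (\<lambda>k. \<omega> (j, k)) else (\<lambda>_. d))" for j
    have preimage: "?\<Phi> -` {\<omega>} \<inter> set_pmf ?M = {G} \<inter> set_pmf ?M"
      using True supp by (auto simp: G_def fun_eq_iff)
    have "pmf (map_pmf ?\<Phi> ?M) \<omega> = measure_pmf.prob ?M (?\<Phi> -` {\<omega>} \<inter> set_pmf ?M)"
      unfolding pmf_map by (rule measure_Int_set_pmf[symmetric])
    also have "\<dots> = pmf ?M G"
      unfolding preimage measure_Int_set_pmf by (rule measure_pmf_single)
    also have "\<dots> = (\<Prod>j\<in>J. \<Prod>k\<in>K. pmf (p j k) (\<omega> (j, k)))"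
      using True by (auto simp: pmf_Pi' J K G_def intro!: prod.cong)
    also have "\<dots> = (\<Prod>x\<in>J \<times> K. pmf ((\<lambda>(j, k). p j k) x) (\<omega> x))"
      by (simp add: prod.cartesian_product case_prod_unfold)
    also have "\<dots> = pmf ?L \<omega>"
      using True by (subst pmf_Pi'[OF finite_cartesian_product[OF J K]]) auto
    finally show ?thesis ..
  next
    case False
    then obtain j k where jk: "(j, k) \<notin> J \<times> K" "\<omega> (j, k) \<noteq> d"
      by auto
    have "?\<Phi> H (j, k) = d" if "H \<in> set_pmf ?M" for H
      using supp[OF that] jk(1) by auto
    then have "\<omega> \<notin> ?\<Phi> ` set_pmf ?M"
      using jk(2) by force
    then show ?thesis
      using False by (simp add: pmf_map_outside pmf_Pi_outside J K)
  qed
qed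

lemma expectation_Pi_bernoulli_count:
  fixes \<phi> :: "nat \<Rightarrow> real"
  assumes "i \<le> n" "0 \<le> a" "a \<le> 1"
  shows "measure_pmf.expectation (Pi_pmf {..<n} False (\<lambda>_. bernoulli_pmf a))
           (\<lambda>F. \<phi> (card {k. k < i \<and> F k})) = measure_pmf.expectation (binomial_pmf i a) \<phi>"
proof -
  have "binomial_pmf i a = map_pmf (\<lambda>F. card {k\<in>{..<i}. F k}) (Pi_pmf {..<i} False (\<lambda>_. bernoulli_pmf a))"
    using assms by (intro binomial_pmf_altdef') auto
  also have "Pi_pmf {..<i} False (\<lambda>_. bernoulli_pmf a) =
      map_pmf (\<lambda>F k. if k \<in> {..<i} then F k else False) (Pi_pmf {..<n} False (\<lambda>_. bernoulli_pmf a))"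
    using assms by (intro Pi_pmf_subset) auto
  finally have "binomial_pmf i a =
      map_pmf (\<lambda>F. card {k. k < i \<and> F k}) (Pi_pmf {..<n} False (\<lambda>_. bernoulli_pmf a))"
    unfolding map_pmf_comp by (auto intro!: map_pmf_cong arg_cong[where f=card])
  then show ?thesis
    by simp
qed

lemma expectation_walks_pmf_prod:
  fixes \<phi> :: "nat \<Rightarrow> nat \<Rightarrow> real"
  assumes "i \<le> n" "\<forall>j<r. 0 \<le> \<alpha> j \<and> \<alpha> j \<le> 1" "\<And>j x. 0 \<le> \<phi> j x \<and> \<phi> j x \<le> 1"
  shows "measure_pmf.expectation (walks_pmf \<alpha> r n) (\<lambda>\<omega>. \<Prod>j<r. \<phi> j (card {k. k < i \<and> \<omega> (j, k)}))
       = (\<Prod>j<r. measure_pmf.expectation (binomial_pmf i (\<alpha> j)) (\<phi> j))"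
proof -
  let ?M = "Pi_pmf {..<r} (\<lambda>_. False) (\<lambda>j. Pi_pmf {..<n} False (\<lambda>_. bernoulli_pmf (\<alpha> j)))"
  have walks: "walks_pmf \<alpha> r n = map_pmf (\<lambda>F (j, k). if j \<in> {..<r} then F j k else False) ?M"
    unfolding walks_pmf_def by (rule Pi_pmf_Times) auto
  have "measure_pmf.expectation (walks_pmf \<alpha> r n) (\<lambda>\<omega>. \<Prod>j<r. \<phi> j (card {k. k < i \<and> \<omega> (j, k)}))
      = measure_pmf.expectation ?M (\<lambda>G. \<Prod>j<r. \<phi> j (card {k. k < i \<and> G j k}))"
    unfolding walks integral_map_pmf by (intro Bochner_Integration.integral_cong refl prod.cong) auto
  also have "\<dots> = (\<Prod>j<r. measure_pmf.expectation (Pi_pmf {..<n} False (\<lambda>_. bernoulli_pmf (\<alpha> j)))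
                       (\<lambda>F. \<phi> j (card {k. k < i \<and> F k})))"
    using assms(3) by (intro expectation_prod_Pi_pmf measure_pmf.integrable_const_bound[where B=1]) auto
  also have "\<dots> = (\<Prod>j<r. measure_pmf.expectation (binomial_pmf i (\<alpha> j)) (\<phi> j))"
    using assms(1,2) by (intro prod.cong refl expectation_Pi_bernoulli_count) auto
  finally show ?thesis .
qed

definition visible_indicator :: "nat \<Rightarrow> nat \<Rightarrow> nat \<Rightarrow> nat \<Rightarrow> real" where
  "visible_indicator b1 b2 i x = (if b_visible b1 b2 (int x, int (i - x)) then 1 else 0)"

lemma walk_pos_eq: "walk_pos \<omega> j i = (int (card {k. k < i \<and> \<omega> (j, k)}), int (i - card {k. k < i \<and> \<omega> (j, k)}))"
proof -
  have "{k. k < i \<and> \<not> \<omega> (j, k)} = {..<i} - {k. k < i \<and> \<omega> (j, k)}"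
    by auto
  then have "card {k. k < i \<and> \<not> \<omega> (j, k)} = i - card {k. k < i \<and> \<omega> (j, k)}"
    by (simp add: card_Diff_subset subset_eq)
  then show ?thesis
    unfolding walk_pos_def by simp
qed

lemma Y_eq_prod: "Y b1 b2 r \<omega> i = (\<Prod>j<r. visible_indicator b1 b2 i (card {k. k < i \<and> \<omega> (j, k)}))"
  unfolding Y_def visible_indicator_def walk_pos_eq by (simp add: prod_if_all)

lemma expectation_Y:
  assumes "i \<le> n" "\<forall>j<r. 0 \<le> \<alpha> j \<and> \<alpha> j \<le> 1"
  shows "measure_pmf.expectation (walks_pmf \<alpha> r n) (\<lambda>\<omega>. Y b1 b2 r \<omega> i) =
         (\<Prod>j<r. measure_pmf.expectation (binomial_pmf i (\<alpha> j)) (visible_indicator b1 b2 i))"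
  unfolding Y_eq_prod by (rule expectation_walks_pmf_prod[OF assms]) (simp add: visible_indicator_def)

lemma expectation_Rbar:
  "measure_pmf.expectation (walks_pmf \<alpha> r n) (Rbar b1 b2 r n) =
     (\<Sum>i=1..n. measure_pmf.expectation (walks_pmf \<alpha> r n) (\<lambda>\<omega>. Y b1 b2 r \<omega> i)) / real n"
  unfolding Rbar_def integral_mult_right_zero
  by (subst Bochner_Integration.integral_sum)
     (auto intro!: measure_pmf.integrable_const_bound[where B=1] simp: Y_def)

section \<open>Binomial residues are almost equidistributed\<close>

definition binomial_weight :: "nat \<Rightarrow> real \<Rightarrow> nat \<Rightarrow> real" where
  "binomial_weight i g k = real (i choose k) * g ^ k * (1 - g) ^ (i - k)"

lemma binomial_weight_nonneg: "0 \<le> g \<Longrightarrow> g \<le> 1 \<Longrightarrow> binomial_weight i g k \<ge> 0"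
  unfolding binomial_weight_def by simp

lemma binomial_weight_eq_0: "i < k \<Longrightarrow> binomial_weight i g k = 0"
  unfolding binomial_weight_def by simp

lemma binomial_weight_complement: "k \<le> i \<Longrightarrow> binomial_weight i g (i - k) = binomial_weight i (1 - g) k"
  unfolding binomial_weight_def by (simp add: binomial_symmetric[symmetric])

lemma sum_binomial_weight: "(\<Sum>k\<le>i. binomial_weight i g k) = 1"
  using binomial_ring[of g "1 - g" i] unfolding binomial_weight_def by simp

lemma Suc_mult_binomial_weight_Suc:
  "real (Suc k) * binomial_weight (Suc i) g (Suc k) = real (Suc i) * g * binomial_weight i g k"
proof -
  have "real (Suc k) * real (Suc i choose Suc k) = real (Suc i) * real (i choose k)"
    by (simp only: of_nat_mult[symmetric] Suc_times_binomial)
  then show ?thesis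
    unfolding binomial_weight_def by (simp add: ac_simps)
qed

lemma sum_binomial_weight_mean: "(\<Sum>k\<le>i. real k * binomial_weight i g k) = real i * g"
proof (cases i)
  case (Suc m)
  have "(\<Sum>k\<le>i. real k * binomial_weight i g k) = (\<Sum>k\<le>m. real (Suc k) * binomial_weight (Suc m) g (Suc k))"
    unfolding Suc sum.atMost_Suc_shift by simp
  also have "\<dots> = (\<Sum>k\<le>m. real (Suc m) * g * binomial_weight m g k)"
    by (simp only: Suc_mult_binomial_weight_Suc)
  also have "\<dots> = real (Suc m) * g"
    by (simp add: sum_binomial_weight flip: sum_distrib_left)
  finally show ?thesis
    using Suc by simp
qed (simp add: binomial_weight_def)

lemma sum_binomial_weight_factorial_moment:
  "(\<Sum>k\<le>i. real k * (real k - 1) * binomial_weight i g k) = real i * (real i - 1) * g ^ 2"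
proof (cases i)
  case (Suc m)
  have "(\<Sum>k\<le>i. real k * (real k - 1) * binomial_weight i g k) =
        (\<Sum>k\<le>m. real k * (real (Suc k) * binomial_weight (Suc m) g (Suc k)))"
    unfolding Suc sum.atMost_Suc_shift by (simp add: ac_simps)
  also have "\<dots> = (\<Sum>k\<le>m. real (Suc m) * g * (real k * binomial_weight m g k))"
    unfolding Suc_mult_binomial_weight_Suc by (simp add: ac_simps)
  also have "\<dots> = real (Suc m) * g * (real m * g)"
    by (simp add: sum_binomial_weight_mean flip: sum_distrib_left)
  finally show ?thesis
    using Suc by (simp add: power2_eq_square)
qed (simp add: binomial_weight_def)

lemma sum_binomial_weight_dev_sq:
  "(\<Sum>k\<le>i. binomial_weight i g k * (real k - (real i + 1) * g) ^ 2) = real i * g * (1 - g) + g ^ 2"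
proof -
  let ?c = "(real i + 1) * g"
  have "binomial_weight i g k * (real k - ?c) ^ 2 = real k * (real k - 1) * binomial_weight i g k
          + (1 - 2 * ?c) * (real k * binomial_weight i g k) + ?c ^ 2 * binomial_weight i g k" for k
    by (simp add: power2_eq_square algebra_simps)
  then have "(\<Sum>k\<le>i. binomial_weight i g k * (real k - ?c) ^ 2) =
      (\<Sum>k\<le>i. real k * (real k - 1) * binomial_weight i g k)
      + (1 - 2 * ?c) * (\<Sum>k\<le>i. real k * binomial_weight i g k) + ?c ^ 2 * (\<Sum>k\<le>i. binomial_weight i g k)"
    by (simp add: sum.distrib sum_distrib_left)
  also have "\<dots> = real i * (real i - 1) * g ^ 2 + (1 - 2 * ?c) * (real i * g) + ?c ^ 2"
    by (simp only: sum_binomial_weight_factorial_moment sum_binomial_weight_mean sum_binomial_weight mult_1_right)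
  also have "\<dots> = real i * g * (1 - g) + g ^ 2"
    by (simp add: power2_eq_square algebra_simps)
  finally show ?thesis .
qed

lemma binomial_Suc_Suc_mult_rising:
  "real (Suc (Suc i) choose Suc (Suc z)) * ((real z + 1) * (real z + 2)) = (real i + 1) * (real i + 2) * real (i choose z)"
proof -
  define A where "A = Suc (Suc i) choose Suc (Suc z)"
  define B where "B = Suc i choose Suc z"
  define C where "C = i choose z"
  have "Suc (Suc z) * A = Suc (Suc i) * B" "Suc z * B = Suc i * C"
    unfolding A_def B_def C_def by (rule Suc_times_binomial)+
  then have AB: "(real z + 2) * real A = (real i + 2) * real B"
    and BC: "(real z + 1) * real B = (real i + 1) * real C"
    by (simp_all add: algebra_simps flip: of_nat_mult)
  have "real A * ((real z + 1) * (real z + 2)) = (real z + 1) * ((real z + 2) * real A)"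
    by (simp add: ac_simps)
  also have "\<dots> = (real i + 2) * ((real z + 1) * real B)"
    unfolding AB by (simp add: ac_simps)
  also have "\<dots> = (real i + 1) * (real i + 2) * real C"
    unfolding BC by (simp add: ac_simps)
  finally show ?thesis
    unfolding A_def C_def .
qed

lemma binomial_weight_div_rising:
  assumes "d \<noteq> 0"
  shows "binomial_weight i d z / ((real z + 1) * (real z + 2)) =
           binomial_weight (Suc (Suc i)) d (Suc (Suc z)) / (d ^ 2 * ((real i + 1) * (real i + 2)))"
proof -
  have pos: "(real z + 1) * (real z + 2) > 0" "(real i + 1) * (real i + 2) > 0"
    by simp_all
  have "binomial_weight (Suc (Suc i)) d (Suc (Suc z)) * ((real z + 1) * (real z + 2)) =
          d ^ 2 * ((real i + 1) * (real i + 2)) * binomial_weight i d z"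
    unfolding binomial_weight_def using binomial_Suc_Suc_mult_rising[of i z]
    by (simp add: power2_eq_square ac_simps del: binomial_Suc_Suc)
  then show ?thesis
    using assms pos by (subst frac_eq_eq) (auto simp: ac_simps)
qed

lemma sum_binomial_weight_div_rising:
  assumes "0 < d" "d \<le> 1"
  shows "(\<Sum>z\<le>i. binomial_weight i d z / ((real z + 1) * (real z + 2))) \<le> 1 / (d ^ 2 * ((real i + 1) * (real i + 2)))"
proof -
  have "(\<Sum>z\<le>i. binomial_weight (Suc (Suc i)) d (Suc (Suc z))) =
          (\<Sum>w\<in>(\<lambda>z. Suc (Suc z)) ` {..i}. binomial_weight (Suc (Suc i)) d w)"
    by (subst sum.reindex) (auto simp: inj_on_def)
  also have "\<dots> \<le> (\<Sum>w\<le>Suc (Suc i). binomial_weight (Suc (Suc i)) d w)"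
    using assms by (intro sum_mono2) (auto intro: binomial_weight_nonneg)
  finally have "(\<Sum>z\<le>i. binomial_weight (Suc (Suc i)) d (Suc (Suc z))) \<le> 1"
    by (simp only: sum_binomial_weight)
  then show ?thesis
    using assms by (simp add: binomial_weight_div_rising sum_divide_distrib[symmetric] divide_right_mono)
qed

definition shifted_binomial_weight :: "nat \<Rightarrow> real \<Rightarrow> nat \<Rightarrow> real" where
  "shifted_binomial_weight i g k = (if k = 0 then 0 else binomial_weight i g (k - 1))"

lemma shifted_binomial_weight_ratio:
  assumes "k \<le> i"
  shows "shifted_binomial_weight i g k * ((real i - real k + 1) * g) = binomial_weight i g k * real k * (1 - g)"
proof (cases k)
  case (Suc k')
  have "(i - k') * (i choose k') = Suc k' * (i choose Suc k')"
    by (simp only: binomial_absorb_comp binomial_absorption)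
  then have choose: "real (i - k') * real (i choose k') = real (Suc k') * real (i choose Suc k')"
    by (metis of_nat_mult)
  have "i - k' = Suc (i - Suc k')"
    using assms Suc by simp
  then have power: "(1 - g) ^ (i - k') = (1 - g) ^ (i - Suc k') * (1 - g)"
    by simp
  have diff: "real i - real (Suc k') + 1 = real (i - k')"
    using assms Suc by (simp add: of_nat_diff)
  have "shifted_binomial_weight i g k * ((real i - real k + 1) * g) =
      (real (i - k') * real (i choose k')) * g ^ Suc k' * (1 - g) ^ (i - k')"
    unfolding Suc shifted_binomial_weight_def binomial_weight_def diff by (simp add: ac_simps)
  also have "\<dots> = binomial_weight i g k * real k * (1 - g)"
    unfolding choose Suc binomial_weight_def power by (simp add: ac_simps)
  finally show ?thesis .
qed (simp add: shifted_binomial_weight_def)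

lemma abs_binomial_weight_diff_shifted:
  assumes "0 < g" "g < 1" "k \<le> i"
  shows "\<bar>binomial_weight i g k - shifted_binomial_weight i g k\<bar> =
           binomial_weight i g k * \<bar>(real i + 1) * g - real k\<bar> / ((real i - real k + 1) * g)"
proof -
  have pos: "(real i - real k + 1) * g > 0"
    using assms by simp
  have "(binomial_weight i g k - shifted_binomial_weight i g k) * ((real i - real k + 1) * g) =
          binomial_weight i g k * ((real i + 1) * g - real k)"
    using shifted_binomial_weight_ratio[OF assms(3), of g] by (simp add: algebra_simps)
  then have "binomial_weight i g k - shifted_binomial_weight i g k =
               binomial_weight i g k * ((real i + 1) * g - real k) / ((real i - real k + 1) * g)"
    using pos by (simp add: field_simps)
  then show ?thesis
    using pos binomial_weight_nonneg[of g i k] assms by (simp add: abs_mult abs_divide)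
qed

lemma binomial_weight_div_sq_le:
  assumes "0 < g" "g \<le> 1" "k \<le> i"
  shows "binomial_weight i g k / ((real i - real k + 1) * g) ^ 2 \<le>
           2 / g ^ 2 * (binomial_weight i g k / ((real (i - k) + 1) * (real (i - k) + 2)))"
proof -
  define a where "a = real (i - k)"
  have "a \<ge> 0" "real i - real k + 1 = a + 1"
    unfolding a_def using assms by (simp_all add: of_nat_diff)
  have "(a + 1) * (a + 2) * g ^ 2 \<le> 2 * ((a + 1) * g) ^ 2"
    using \<open>a \<ge> 0\<close> by (simp add: power2_eq_square algebra_simps mult_right_mono)
  then have "1 / ((a + 1) * g) ^ 2 \<le> 2 / ((a + 1) * (a + 2) * g ^ 2)"
    using \<open>a \<ge> 0\<close> assms by (simp add: divide_simps)
  then have "binomial_weight i g k * (1 / ((a + 1) * g) ^ 2) \<le>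
               binomial_weight i g k * (2 / ((a + 1) * (a + 2) * g ^ 2))"
    using assms by (intro mult_left_mono binomial_weight_nonneg) auto
  then show ?thesis
    unfolding \<open>real i - real k + 1 = a + 1\<close> a_def[symmetric] by (simp add: field_simps)
qed

lemma sum_binomial_weight_div_sq:
  assumes "0 < g" "g < 1"
  shows "(\<Sum>k\<le>i. binomial_weight i g k / ((real i - real k + 1) * g) ^ 2)
           \<le> 2 / (g ^ 2 * (1 - g) ^ 2 * ((real i + 1) * (real i + 2)))"
proof -
  have "(\<Sum>k\<le>i. binomial_weight i g k / ((real i - real k + 1) * g) ^ 2) \<le>
      (\<Sum>k\<le>i. 2 / g ^ 2 * (binomial_weight i g k / ((real (i - k) + 1) * (real (i - k) + 2))))"
    using assms by (intro sum_mono binomial_weight_div_sq_le) auto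
  also have "\<dots> = 2 / g ^ 2 * (\<Sum>z\<le>i. binomial_weight i (1 - g) z / ((real z + 1) * (real z + 2)))"
    unfolding sum_distrib_left[symmetric]
    by (rule arg_cong, rule sum.reindex_bij_witness[of _ "\<lambda>z. i - z" "\<lambda>z. i - z"])
       (auto simp: binomial_weight_complement)
  also have "\<dots> \<le> 2 / g ^ 2 * (1 / ((1 - g) ^ 2 * ((real i + 1) * (real i + 2))))"
    using assms by (intro mult_left_mono sum_binomial_weight_div_rising) auto
  finally show ?thesis
    by simp
qed

definition equidist_const :: "real \<Rightarrow> real" where
  "equidist_const g = 1 / 2 + 1 / (g ^ 2 * (1 - g) ^ 2) + 1 / (1 - g)"

lemma equidist_const_nonneg: "g < 1 \<Longrightarrow> 0 \<le> equidist_const g"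
  unfolding equidist_const_def by (intro add_nonneg_nonneg) auto

lemma sum_binomial_weight_dev_sq_le:
  assumes "0 \<le> g" "g \<le> 1"
  shows "(\<Sum>k\<le>i. binomial_weight i g k * (real k - (real i + 1) * g) ^ 2) \<le> real i + 1"
proof -
  have "g * (1 - g) \<le> 1 * 1"
    using assms by (intro mult_mono) auto
  then have "real i * g * (1 - g) \<le> real i"
    using mult_left_le[of "g * (1 - g)" "real i"] by (simp add: ac_simps)
  moreover have "g ^ 2 \<le> 1"
    using assms by (simp add: power_le_one)
  ultimately show ?thesis
    unfolding sum_binomial_weight_dev_sq by linarith
qed

text \<open>The AM-GM inequality with \<open>t = 1 / ((i + 1) * sqrt i)\<close> splits the sum into the variance of
  \<open>X\<close> and an inverse moment, both of the right order.\<close>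

lemma sum_abs_binomial_weight_diff_shifted_atMost:
  assumes "0 < g" "g < 1" "i \<ge> 1"
  shows "(\<Sum>k\<le>i. \<bar>binomial_weight i g k - shifted_binomial_weight i g k\<bar>)
           \<le> 1 / (2 * sqrt (real i)) + 1 / (g ^ 2 * (1 - g) ^ 2 * sqrt (real i))"
proof -
  define s where "s = sqrt (real i)"
  define t where "t = 1 / ((real i + 1) * s)"
  define c where "c = g ^ 2 * (1 - g) ^ 2"
  have "s > 0" "t > 0" "c > 0" "s * s = real i"
    using assms unfolding s_def t_def c_def by simp_all
  let ?w = "binomial_weight i g"
  let ?X = "\<lambda>k. (real i + 1) * g - real k"
  let ?Y = "\<lambda>k. (real i - real k + 1) * g"
  have "(\<Sum>k\<le>i. \<bar>?w k - shifted_binomial_weight i g k\<bar>) = (\<Sum>k\<le>i. ?w k * (\<bar>?X k\<bar> / ?Y k))"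
    using assms by (intro sum.cong refl) (simp add: abs_binomial_weight_diff_shifted)
  also have "\<dots> \<le> (\<Sum>k\<le>i. ?w k * ((t * (?X k) ^ 2 + 1 / (t * (?Y k) ^ 2)) / 2))"
    using assms \<open>t > 0\<close> by (intro sum_mono mult_left_mono abs_div_le_amgm binomial_weight_nonneg) auto
  also have "\<dots> = t / 2 * (\<Sum>k\<le>i. ?w k * (real k - (real i + 1) * g) ^ 2)
                   + 1 / (2 * t) * (\<Sum>k\<le>i. ?w k / (?Y k) ^ 2)"
    by (simp add: sum_distrib_left sum.distrib[symmetric] power2_commute field_simps)
  also have "\<dots> \<le> t / 2 * (real i + 1) + 1 / (2 * t) * (2 / (c * ((real i + 1) * (real i + 2))))"
    unfolding c_def using assms \<open>t > 0\<close>
    by (intro add_mono mult_left_mono sum_binomial_weight_dev_sq_le sum_binomial_weight_div_sq) auto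
  also have "t / 2 * (real i + 1) = 1 / (2 * s)"
    using \<open>s > 0\<close> unfolding t_def by simp
  also have "1 / (2 * t) * (2 / (c * ((real i + 1) * (real i + 2)))) = s / (c * (real i + 2))"
  proof -
    have "1 / (2 * t) = (real i + 1) * s / 2"
      unfolding t_def by simp
    then show ?thesis
      by simp
  qed
  also have "s / (c * (real i + 2)) = s * s / (c * s * (real i + 2))"
    using \<open>s > 0\<close> by simp
  also have "\<dots> \<le> (real i + 2) / (c * s * (real i + 2))"
    using \<open>s > 0\<close> \<open>c > 0\<close> \<open>s * s = real i\<close> by (intro divide_right_mono) auto
  finally show ?thesis
    unfolding s_def c_def by simp
qed

lemma sum_abs_binomial_weight_diff_shifted:
  assumes "0 < g" "g < 1" "i \<ge> 1"
  shows "(\<Sum>k<Suc (Suc i). \<bar>binomial_weight i g k - shifted_binomial_weight i g k\<bar>)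
           \<le> equidist_const g / sqrt (real i)"
proof -
  have "\<bar>binomial_weight i g (Suc i) - shifted_binomial_weight i g (Suc i)\<bar> = g ^ i"
    using assms by (simp add: shifted_binomial_weight_def binomial_weight_def binomial_eq_0)
  also have "\<dots> \<le> 1 / ((1 - g) * sqrt (real i))"
    using power_le_inverse_sqrt[OF assms] .
  finally show ?thesis
    using sum_abs_binomial_weight_diff_shifted_atMost[OF assms] assms
    by (simp add: lessThan_Suc_atMost equidist_const_def add_divide_distrib)
qed

definition residue_prob :: "nat \<Rightarrow> real \<Rightarrow> nat \<Rightarrow> nat \<Rightarrow> real" where
  "residue_prob i g m a = (\<Sum>k\<le>i. binomial_weight i g k * (if k mod m = a mod m then 1 else 0))"

lemma residue_prob_lessThan:
  "residue_prob i g m a = (\<Sum>k<Suc (Suc i). binomial_weight i g k * (if k mod m = a mod m then 1 else 0))"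
  unfolding residue_prob_def lessThan_Suc_atMost by (simp add: binomial_weight_eq_0)

lemma sum_residue_prob:
  assumes "m > 0"
  shows "(\<Sum>a<m. residue_prob i g m a) = 1"
proof -
  have "(\<Sum>a<m. (if k mod m = a mod m then 1 else 0 :: real)) = (\<Sum>a<m. if a = k mod m then 1 else 0)" for k
    by (intro sum.cong) auto
  then have "(\<Sum>a<m. binomial_weight i g k * (if k mod m = a mod m then 1 else 0)) = binomial_weight i g k" for k
    using assms by (simp flip: sum_distrib_left)
  then have "(\<Sum>a<m. residue_prob i g m a) = (\<Sum>k\<le>i. binomial_weight i g k)"
    unfolding residue_prob_def by (subst sum.swap) simp
  then show ?thesis
    by (simp add: sum_binomial_weight)
qed

lemma nat_mod_eq_iff_int_dvd: "(k::nat) mod m = a mod m \<longleftrightarrow> int m dvd (int k - int a)"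
  by (metis of_nat_eq_iff of_nat_mod mod_eq_dvd_iff)

text \<open>Moving to the next residue class changes its probability by differences between the
  weights of \<open>X\<close> and \<open>X + 1\<close>, so any two classes differ by at most the total variation distance
  of \<open>X\<close> and \<open>X + 1\<close>.\<close>

lemma residue_prob_Suc_diff:
  "residue_prob i g m (Suc a) - residue_prob i g m a =
     (\<Sum>k<Suc (Suc i). (binomial_weight i g k - shifted_binomial_weight i g k) *
                        (if k mod m = Suc a mod m then 1 else 0))"
proof -
  have "(\<Sum>k<Suc (Suc i). shifted_binomial_weight i g k * (if k mod m = Suc a mod m then 1 else 0)) =
          (\<Sum>k<Suc i. binomial_weight i g k * (if Suc k mod m = Suc a mod m then 1 else 0))"
    unfolding sum.lessThan_Suc_shift[of _ "Suc i"] by (simp add: shifted_binomial_weight_def)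
  also have "\<dots> = residue_prob i g m a"
    unfolding residue_prob_def lessThan_Suc_atMost nat_mod_eq_iff_int_dvd by simp
  finally show ?thesis
    unfolding residue_prob_lessThan by (simp add: sum_subtractf left_diff_distrib)
qed

lemma abs_residue_prob_diff_le:
  assumes "t \<le> m"
  shows "\<bar>residue_prob i g m (c + t) - residue_prob i g m c\<bar> \<le>
           (\<Sum>k<Suc (Suc i). \<bar>binomial_weight i g k - shifted_binomial_weight i g k\<bar>)"
proof -
  let ?D = "\<lambda>k. binomial_weight i g k - shifted_binomial_weight i g k"
  let ?I = "\<lambda>u k. if k mod m = Suc (c + u) mod m then 1 else 0 :: real"
  have "residue_prob i g m (c + t) - residue_prob i g m c =
          (\<Sum>u<t. residue_prob i g m (Suc (c + u)) - residue_prob i g m (c + u))"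
    using sum_lessThan_telescope[of "\<lambda>u. residue_prob i g m (c + u)" t] by simp
  also have "\<dots> = (\<Sum>u<t. \<Sum>k<Suc (Suc i). ?D k * ?I u k)"
    by (simp only: residue_prob_Suc_diff)
  finally have diff: "residue_prob i g m (c + t) - residue_prob i g m c = (\<Sum>u<t. \<Sum>k<Suc (Suc i). ?D k * ?I u k)" .
  have "\<bar>\<Sum>u<t. \<Sum>k<Suc (Suc i). ?D k * ?I u k\<bar> \<le> (\<Sum>u<t. \<Sum>k<Suc (Suc i). \<bar>?D k\<bar> * ?I u k)"
    by (rule order.trans[OF sum_abs sum_mono], rule order.trans[OF sum_abs sum_mono]) (simp add: abs_mult)
  then have "\<bar>residue_prob i g m (c + t) - residue_prob i g m c\<bar> \<le>
      (\<Sum>u<t. \<Sum>k<Suc (Suc i). \<bar>?D k\<bar> * ?I u k)"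
    unfolding diff .
  also have "\<dots> = (\<Sum>k<Suc (Suc i). \<bar>?D k\<bar> * (\<Sum>u<t. ?I u k))"
    by (subst sum.swap) (simp add: sum_distrib_left)
  also have "\<dots> \<le> (\<Sum>k<Suc (Suc i). \<bar>?D k\<bar> * 1)"
  proof (intro sum_mono mult_left_mono)
    fix k
    have "inj_on (\<lambda>u. Suc (c + u) mod m) {..<t}"
    proof (rule inj_onI)
      fix x y
      assume "x \<in> {..<t}" "y \<in> {..<t}" "Suc (c + x) mod m = Suc (c + y) mod m"
      then have "x mod m = y mod m"
        by (simp add: nat_mod_eq_iff_int_dvd)
      moreover have "x < m" "y < m"
        using \<open>x \<in> _\<close> \<open>y \<in> _\<close> assms by simp_all
      ultimately show "x = y"
        by simp
    qed
    then have "card {u\<in>{..<t}. k mod m = Suc (c + u) mod m} \<le> 1"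
      by (auto simp: card_le_Suc0_iff_eq inj_on_def)
    then show "(\<Sum>u<t. ?I u k) \<le> 1"
      by (simp add: sum.If_cases Int_def conj_commute)
  qed simp
  finally show ?thesis
    by simp
qed

lemma abs_residue_prob_minus_inverse_le:
  assumes "m > 0"
  shows "\<bar>residue_prob i g m a - 1 / real m\<bar> \<le>
           (\<Sum>k<Suc (Suc i). \<bar>binomial_weight i g k - shifted_binomial_weight i g k\<bar>)"
proof -
  define T where "T = (\<Sum>k<Suc (Suc i). \<bar>binomial_weight i g k - shifted_binomial_weight i g k\<bar>)"
  have mod: "residue_prob i g m (a mod m) = residue_prob i g m a"
    unfolding residue_prob_def by simp
  have pair: "\<bar>residue_prob i g m a - residue_prob i g m b\<bar> \<le> T" if "b < m" for b
  proof (cases "a mod m \<le> b")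
    case True
    then show ?thesis
      using abs_residue_prob_diff_le[of "b - a mod m" m i g "a mod m"] that mod
      unfolding T_def by (simp add: abs_minus_commute)
  next
    case False
    moreover have "a mod m - b \<le> m"
      using assms by (simp add: le_diff_conv trans_le_add1 less_imp_le)
    ultimately show ?thesis
      using abs_residue_prob_diff_le[of "a mod m - b" m i g b] mod unfolding T_def by simp
  qed
  have "residue_prob i g m a - 1 / real m = (\<Sum>b<m. residue_prob i g m a - residue_prob i g m b) / real m"
    using assms sum_residue_prob[OF assms, of i g] by (simp add: sum_subtractf field_simps)
  also have "\<bar>\<dots>\<bar> \<le> (\<Sum>b<m. T) / real m"
    unfolding abs_divide abs_of_nat using assms pair
    by (intro divide_right_mono order.trans[OF sum_abs sum_mono]) auto
  finally show ?thesis
    using assms unfolding T_def by simp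
qed

lemma residue_prob_approx:
  assumes "0 < g" "g < 1" "i \<ge> 1" "m > 0"
  shows "\<bar>residue_prob i g m a - 1 / real m\<bar> \<le> equidist_const g / sqrt (real i)"
  using abs_residue_prob_minus_inverse_le[OF assms(4)] sum_abs_binomial_weight_diff_shifted[OF assms(1-3)]
  by (rule order.trans)

lemma expectation_binomial_pmf_eq_sum:
  fixes f :: "nat \<Rightarrow> real"
  assumes "0 \<le> a" "a \<le> 1"
  shows "measure_pmf.expectation (binomial_pmf i a) f = (\<Sum>k\<le>i. binomial_weight i a k * f k)"
  using assms by (subst expectation_binomial_pmf') (auto simp: binomial_weight_def ac_simps)

section \<open>The main term\<close>

definition local_prob :: "nat \<Rightarrow> nat \<Rightarrow> nat \<Rightarrow> real" where
  "local_prob b2 r p = (1 - 1 / real p ^ b2) ^ r"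

definition visible_density :: "nat \<Rightarrow> nat \<Rightarrow> nat \<Rightarrow> nat \<Rightarrow> real" where
  "visible_density b1 b2 r i = (\<Prod>p\<in>{p. prime p \<and> p ^ b1 dvd i}. local_prob b2 r p)"

definition partial_euler_product :: "nat \<Rightarrow> nat \<Rightarrow> nat \<Rightarrow> nat \<Rightarrow> real" where
  "partial_euler_product b1 b2 r n = (\<Prod>p\<in>{p. prime p \<and> p \<le> n}. 1 + (local_prob b2 r p - 1) / real p ^ b1)"

lemma local_prob_bounds:
  assumes "p \<ge> 1" "b2 \<ge> 1"
  shows "0 \<le> local_prob b2 r p" "local_prob b2 r p \<le> 1" "1 - local_prob b2 r p \<le> real r / real p ^ b2"
proof -
  have x: "0 \<le> 1 / real p ^ b2" "1 / real p ^ b2 \<le> 1"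
    using assms by auto
  then show "0 \<le> local_prob b2 r p" "local_prob b2 r p \<le> 1"
    unfolding local_prob_def by (simp_all add: power_le_one)
  have "1 + real r * (- (1 / real p ^ b2)) \<le> (1 + - (1 / real p ^ b2)) ^ r"
    using x by (intro Bernoulli_inequality) auto
  then show "1 - local_prob b2 r p \<le> real r / real p ^ b2"
    unfolding local_prob_def by simp
qed

lemma visible_density_expand:
  assumes b1: "b1 \<ge> 1" and i: "1 \<le> i" "i \<le> n"
  shows "visible_density b1 b2 r i = (\<Sum>S\<in>Pow {p. prime p \<and> p \<le> n}.
            if (\<Prod>S) ^ b1 dvd i then (\<Prod>p\<in>S. local_prob b2 r p - 1) else 0)"
proof -
  let ?P = "{p. prime p \<and> p \<le> n}"
  have fin: "finite ?P"
    by simp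
  have sub: "{p. prime p \<and> p ^ b1 dvd i} = {p\<in>?P. p ^ b1 dvd i}"
  proof (intro equalityI subsetI)
    fix p assume "p \<in> {p. prime p \<and> p ^ b1 dvd i}"
    then show "p \<in> {p\<in>?P. p ^ b1 dvd i}"
      using power_dvd_imp_le[OF b1, of i p] i by auto
  qed auto
  have "visible_density b1 b2 r i = (\<Prod>p\<in>?P. if p ^ b1 dvd i then local_prob b2 r p else 1)"
    unfolding visible_density_def sub using fin by (rule prod.inter_filter)
  also have "\<dots> = (\<Prod>p\<in>?P. (if p ^ b1 dvd i then local_prob b2 r p - 1 else 0) + 1)"
    by (intro prod.cong) auto
  also have "\<dots> = (\<Sum>S\<in>Pow ?P. (\<Prod>p\<in>S. if p ^ b1 dvd i then local_prob b2 r p - 1 else 0) * (\<Prod>p\<in>?P - S. 1))"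
    using fin by (rule prod_add)
  also have "\<dots> = (\<Sum>S\<in>Pow ?P. if (\<Prod>S) ^ b1 dvd i then (\<Prod>p\<in>S. local_prob b2 r p - 1) else 0)"
  proof (rule sum.cong[OF refl])
    fix S assume "S \<in> Pow ?P"
    then have S: "finite S" "\<forall>p\<in>S. prime p"
      using fin by (auto intro: finite_subset)
    show "(\<Prod>p\<in>S. if p ^ b1 dvd i then local_prob b2 r p - 1 else 0) * (\<Prod>p\<in>?P - S. 1) =
          (if (\<Prod>S) ^ b1 dvd i then (\<Prod>p\<in>S. local_prob b2 r p - 1) else 0)"
      using prod_if_all[OF S(1), of "\<lambda>p. p ^ b1 dvd i" "\<lambda>p. local_prob b2 r p - 1"]
        prime_powers_dvd_iff_prod_dvd[OF S, of b1 i] by simp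
  qed
  finally show ?thesis .
qed

lemma sum_visible_density:
  assumes "b1 \<ge> 1" "n \<ge> 1"
  shows "(\<Sum>i=1..n. visible_density b1 b2 r i) = (\<Sum>S\<in>Pow {p. prime p \<and> p \<le> n}.
            (\<Prod>p\<in>S. local_prob b2 r p - 1) * real (n div (\<Prod>S) ^ b1))"
proof -
  let ?P = "{p. prime p \<and> p \<le> n}"
  let ?a = "\<lambda>S. \<Prod>p\<in>S. local_prob b2 r p - 1"
  have "(\<Sum>i=1..n. visible_density b1 b2 r i) = (\<Sum>i=1..n. \<Sum>S\<in>Pow ?P. if (\<Prod>S) ^ b1 dvd i then ?a S else 0)"
    using assms by (intro sum.cong refl visible_density_expand) auto
  also have "\<dots> = (\<Sum>S\<in>Pow ?P. \<Sum>i=1..n. if (\<Prod>S) ^ b1 dvd i then ?a S else 0)"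
    by (rule sum.swap)
  also have "\<dots> = (\<Sum>S\<in>Pow ?P. \<Sum>i\<in>{i\<in>{1..n}. (\<Prod>S) ^ b1 dvd i}. ?a S)"
    by (intro sum.cong refl sum.inter_filter[symmetric]) simp
  also have "\<dots> = (\<Sum>S\<in>Pow ?P. ?a S * real (n div (\<Prod>S) ^ b1))"
  proof (rule sum.cong[OF refl])
    fix S assume "S \<in> Pow ?P"
    then have "(\<Prod>S) ^ b1 \<ge> 1"
      by (auto simp: Suc_le_eq prime_gt_0_nat intro!: prod_pos)
    then show "(\<Sum>i\<in>{i\<in>{1..n}. (\<Prod>S) ^ b1 dvd i}. ?a S) = ?a S * real (n div (\<Prod>S) ^ b1)"
      using card_multiples_atLeastAtMost[of "(\<Prod>S) ^ b1" n] by simp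
  qed
  finally show ?thesis .
qed

lemma partial_euler_product_expand:
  "partial_euler_product b1 b2 r n = (\<Sum>S\<in>Pow {p. prime p \<and> p \<le> n}. (\<Prod>p\<in>S. local_prob b2 r p - 1) / real ((\<Prod>S) ^ b1))"
proof -
  let ?P = "{p. prime p \<and> p \<le> n}"
  have fin: "finite ?P" by simp
  have "partial_euler_product b1 b2 r n = (\<Prod>p\<in>?P. (local_prob b2 r p - 1) / real p ^ b1 + 1)"
    unfolding partial_euler_product_def by (simp add: add.commute)
  also have "\<dots> = (\<Sum>S\<in>Pow ?P. (\<Prod>p\<in>S. (local_prob b2 r p - 1) / real p ^ b1) * (\<Prod>p\<in>?P - S. 1))"
    using fin by (rule prod_add)
  also have "\<dots> = (\<Sum>S\<in>Pow ?P. (\<Prod>p\<in>S. local_prob b2 r p - 1) / real ((\<Prod>S) ^ b1))"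
    by (intro sum.cong refl) (simp add: prod_dividef prod_power_distrib)
  finally show ?thesis .
qed

lemma local_prob_weight_le:
  assumes "p \<ge> 1" "b1 \<ge> 1" "b2 \<ge> 1"
  shows "\<bar>local_prob b2 r p - 1\<bar> / sqrt (real p ^ b1) \<le> real r * real p powr (-3/2)"
proof -
  have "\<bar>local_prob b2 r p - 1\<bar> \<le> real r / real p ^ b2"
    using local_prob_bounds[OF assms(1,3), of r] by simp
  then have "\<bar>local_prob b2 r p - 1\<bar> / sqrt (real p ^ b1) \<le> (real r / real p ^ b2) / sqrt (real p ^ b1)"
    by (rule divide_right_mono) simp
  also have "\<dots> = real r * (1 / (real p ^ b2 * sqrt (real p ^ b1)))"
    by simp
  also have "\<dots> \<le> real r * real p powr (-3/2)"
    using assms by (intro mult_left_mono inverse_pow_mult_sqrt_le) auto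
  finally show ?thesis .
qed

lemma sum_Pow_prod_local_weight_le:
  assumes "b1 \<ge> 1" "b2 \<ge> 1"
  shows "(\<Sum>S\<in>Pow {p. prime p \<and> p \<le> n}. \<Prod>p\<in>S. \<bar>local_prob b2 r p - 1\<bar> / sqrt (real p ^ b1))
           \<le> exp (real r * (\<Sum>m. real m powr (-3/2)))"
proof -
  let ?P = "{p. prime p \<and> p \<le> n}"
  let ?x = "\<lambda>p. \<bar>local_prob b2 r p - 1\<bar> / sqrt (real p ^ b1)"
  have "(\<Sum>S\<in>Pow ?P. \<Prod>p\<in>S. ?x p) = (\<Prod>p\<in>?P. ?x p + 1)"
    using prod_add[of ?P ?x "\<lambda>_. 1"] by simp
  also have "\<dots> \<le> exp (\<Sum>p\<in>?P. ?x p)"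
    using prod_le_exp_sum[of ?P ?x] by (simp add: add.commute)
  also have "(\<Sum>p\<in>?P. ?x p) \<le> (\<Sum>p\<in>?P. real r * real p powr (-3/2))"
    using assms by (intro sum_mono local_prob_weight_le) (auto simp: Suc_le_eq prime_gt_0_nat)
  also have "\<dots> \<le> real r * (\<Sum>m. real m powr (-3/2))"
    unfolding sum_distrib_left[symmetric]
    by (intro mult_left_mono sum_le_suminf) (auto simp: summable_real_powr_iff)
  finally show ?thesis
    by simp
qed

lemma average_visible_density_approx:
  assumes b1: "b1 \<ge> 1" and b2: "b2 \<ge> 1" and n: "n \<ge> 1"
  shows "\<bar>(\<Sum>i=1..n. visible_density b1 b2 r i) / real n - partial_euler_product b1 b2 r n\<bar>
           \<le> exp (real r * (\<Sum>m. real m powr (-3/2))) / sqrt (real n)"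
proof -
  let ?P = "{p. prime p \<and> p \<le> n}"
  let ?a = "\<lambda>S. \<Prod>p\<in>S. local_prob b2 r p - 1"
  let ?D = "\<lambda>S. (\<Prod>S) ^ b1"
  let ?x = "\<lambda>p. \<bar>local_prob b2 r p - 1\<bar> / sqrt (real p ^ b1)"
  have "(\<Sum>i=1..n. visible_density b1 b2 r i) / real n - partial_euler_product b1 b2 r n =
        (\<Sum>S\<in>Pow ?P. ?a S * (real (n div ?D S) / real n - 1 / real (?D S)))"
    unfolding sum_visible_density[OF b1 n] partial_euler_product_expand
    by (simp add: sum_divide_distrib sum_subtractf right_diff_distrib)
  then have "\<bar>(\<Sum>i=1..n. visible_density b1 b2 r i) / real n - partial_euler_product b1 b2 r n\<bar> \<le>
        (\<Sum>S\<in>Pow ?P. \<bar>?a S\<bar> * \<bar>real (n div ?D S) / real n - 1 / real (?D S)\<bar>)"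
    by (simp add: abs_mult[symmetric] sum_abs)
  also have "\<dots> \<le> (\<Sum>S\<in>Pow ?P. \<bar>?a S\<bar> * (1 / (sqrt (real n) * sqrt (real (?D S)))))"
    using n by (intro sum_mono mult_left_mono abs_div_div_minus_inverse_le)
      (auto simp: Suc_le_eq prime_gt_0_nat intro!: prod_pos)
  also have "\<dots> = (1 / sqrt (real n)) * (\<Sum>S\<in>Pow ?P. \<Prod>p\<in>S. ?x p)"
  proof -
    have "sqrt (real (?D S)) = (\<Prod>p\<in>S. sqrt (real p ^ b1))" for S
      by (simp add: of_nat_prod prod_power_distrib real_sqrt_prod)
    then show ?thesis
      by (simp add: sum_distrib_left abs_prod prod_dividef)
  qed
  also have "\<dots> \<le> (1 / sqrt (real n)) * exp (real r * (\<Sum>m. real m powr (-3/2)))"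
    by (intro mult_left_mono sum_Pow_prod_local_weight_le b1 b2) auto
  finally show ?thesis
    by simp
qed

definition euler_factor :: "nat \<Rightarrow> nat \<Rightarrow> nat \<Rightarrow> nat \<Rightarrow> real" where
  "euler_factor b1 b2 r p = (if prime p then 1 + (local_prob b2 r p - 1) / real p ^ b1 else 1)"

lemma euler_factor_bounds:
  assumes "b1 \<ge> 1" "b2 \<ge> 1"
  shows "0 \<le> euler_factor b1 b2 r m \<and> euler_factor b1 b2 r m \<le> 1 \<and>
           1 - euler_factor b1 b2 r m \<le> real r * real m powr (-2)"
proof (cases "prime m")
  case True
  then have "m \<ge> 1" "real m \<ge> 1"
    using prime_gt_0_nat[OF True] by simp_all
  define q where "q = 1 - local_prob b2 r m"
  have q: "0 \<le> q" "q \<le> 1" "q \<le> real r / real m ^ b2"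
    using local_prob_bounds[OF \<open>m \<ge> 1\<close> assms(2), of r] unfolding q_def by simp_all
  have F: "euler_factor b1 b2 r m = 1 - q / real m ^ b1"
    using True unfolding euler_factor_def q_def by (simp add: diff_divide_distrib)
  have "q / real m ^ b1 \<le> 1"
    using q \<open>real m \<ge> 1\<close> by (simp add: divide_le_eq order.trans[OF _ one_le_power])
  moreover have "q / real m ^ b1 \<le> real r / (real m ^ b2 * real m ^ b1)"
    using q \<open>real m \<ge> 1\<close> by (simp add: divide_right_mono flip: divide_divide_eq_left)
  moreover have "real m * real m \<le> real m ^ b2 * real m ^ b1"
    using \<open>real m \<ge> 1\<close> assms by (intro mult_mono) (auto simp: self_le_power)
  then have "real r / (real m ^ b2 * real m ^ b1) \<le> real r / (real m * real m)"
    using \<open>real m \<ge> 1\<close> by (intro divide_left_mono) auto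
  moreover have "real r / (real m * real m) = real r * real m powr (-2)"
    using \<open>real m \<ge> 1\<close> by (simp add: powr_minus_divide power2_eq_square powr_realpow[symmetric])
  ultimately show ?thesis
    unfolding F using q by simp
qed (simp add: euler_factor_def)

lemma partial_euler_product_eq_prod: "partial_euler_product b1 b2 r n = (\<Prod>m\<le>n. euler_factor b1 b2 r m)"
proof -
  have "(\<Prod>m\<le>n. euler_factor b1 b2 r m) = (\<Prod>m\<in>{m\<in>{..n}. prime m}. euler_factor b1 b2 r m)"
    by (subst prod.inter_filter) (auto simp: euler_factor_def intro!: prod.cong)
  also have "{m\<in>{..n}. prime m} = {p. prime p \<and> p \<le> n}"
    by auto
  finally show ?thesis
    unfolding partial_euler_product_def euler_factor_def by simp
qed

lemma abs_euler_factor_minus_1_le: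
  assumes "b1 \<ge> 1" "b2 \<ge> 1" "m \<ge> 1"
  shows "\<bar>euler_factor b1 b2 r m - 1\<bar> \<le> real r / real m ^ 2"
proof -
  have "real m powr (-2) = 1 / real m powr 2"
    by (simp add: powr_minus_divide)
  also have "real m powr 2 = real m ^ 2"
    using assms by simp
  finally have eq: "real m powr (-2) = 1 / real m ^ 2" .
  have "euler_factor b1 b2 r m \<le> 1" "1 - euler_factor b1 b2 r m \<le> real r * (1 / real m ^ 2)"
    using euler_factor_bounds[OF assms(1,2), of r m] unfolding eq by blast+
  moreover have "0 \<le> real r * (1 / real m ^ 2)"
    by simp
  ultimately show ?thesis
    unfolding abs_le_iff by simp
qed

lemma convergent_prod_euler_factor:
  assumes "b1 \<ge> 1" "b2 \<ge> 1"
  shows "convergent_prod (euler_factor b1 b2 r)"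
proof -
  have "summable (\<lambda>m. real r * real m powr (-2))"
    by (intro summable_mult) (simp add: summable_real_powr_iff)
  then have "summable (\<lambda>m. norm (euler_factor b1 b2 r m - 1))"
    by (rule summable_comparison_test'[where N = 0]) (use euler_factor_bounds[OF assms] in simp)
  then show ?thesis
    by (intro abs_convergent_prod_imp_convergent_prod summable_imp_abs_convergent_prod)
qed

lemma abs_prod_euler_factor_minus_partial_le:
  assumes b1: "b1 \<ge> 1" and b2: "b2 \<ge> 1" and "1 \<le> n" "n \<le> N"
  shows "\<bar>(\<Prod>m\<le>N. euler_factor b1 b2 r m) - partial_euler_product b1 b2 r n\<bar> \<le> real r / real n"
proof -
  let ?F = "euler_factor b1 b2 r"
  note bounds = euler_factor_bounds[OF b1 b2, of r]
  have split: "{..N} = {..n} \<union> {n<..N}"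
    using assms by auto
  have "(\<Prod>m\<le>N. ?F m) = (\<Prod>m\<le>n. ?F m) * (\<Prod>m\<in>{n<..N}. ?F m)"
    unfolding split by (rule prod.union_disjoint) auto
  then have "\<bar>(\<Prod>m\<le>N. ?F m) - partial_euler_product b1 b2 r n\<bar> =
      \<bar>\<Prod>m\<le>n. ?F m\<bar> * \<bar>(\<Prod>m\<in>{n<..N}. ?F m) - (\<Prod>m\<in>{n<..N}. 1)\<bar>"
    unfolding partial_euler_product_eq_prod by (simp add: algebra_simps flip: abs_mult)
  also have "\<dots> \<le> 1 * (\<Sum>m\<in>{n<..N}. \<bar>?F m - 1\<bar>)"
    using bounds norm_prod_diff[of "{n<..N}" ?F "\<lambda>_. 1"]
    by (intro mult_mono) (simp_all add: abs_prod prod_le_1)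
  also have "\<dots> = (\<Sum>m\<in>{n<..N}. \<bar>?F m - 1\<bar>)"
    by simp
  also have "\<dots> \<le> (\<Sum>m\<in>{n<..N}. real r / real m ^ 2)"
    using assms by (intro sum_mono abs_euler_factor_minus_1_le b1 b2) auto
  also have "\<dots> = real r * (\<Sum>m\<in>{n<..N}. 1 / real m ^ 2)"
    by (simp add: sum_distrib_left)
  also have "\<dots> \<le> real r * (1 / real n - 1 / real N)"
    using assms by (intro mult_left_mono sum_inverse_squares_le) auto
  also have "\<dots> \<le> real r / real n"
    by (simp add: right_diff_distrib)
  finally show ?thesis .
qed

lemma partial_euler_product_approx:
  assumes "b1 \<ge> 1" "b2 \<ge> 1" "n \<ge> 1"
  shows "\<bar>partial_euler_product b1 b2 r n - prodinf (euler_factor b1 b2 r)\<bar> \<le> real r / real n"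
proof -
  have "(\<lambda>N. \<Prod>m\<le>N. euler_factor b1 b2 r m) \<longlonglongrightarrow> prodinf (euler_factor b1 b2 r)"
    using convergent_prod_euler_factor[OF assms(1,2)] by (rule convergent_prod_LIMSEQ)
  then have "(\<lambda>N. \<bar>(\<Prod>m\<le>N. euler_factor b1 b2 r m) - partial_euler_product b1 b2 r n\<bar>)
      \<longlonglongrightarrow> \<bar>prodinf (euler_factor b1 b2 r) - partial_euler_product b1 b2 r n\<bar>"
    by (intro tendsto_intros)
  then have "\<bar>prodinf (euler_factor b1 b2 r) - partial_euler_product b1 b2 r n\<bar> \<le> real r / real n"
    by (rule LIMSEQ_le_const2) (use abs_prod_euler_factor_minus_partial_le assms in blast)
  then show ?thesis
    by (simp add: abs_minus_commute)
qed

lemma sum_binomial_weight_avoid_approx: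
  fixes A :: "nat set"
  assumes "0 < a" "a < 1" "i \<ge> 1" "finite A" "\<forall>p\<in>A. prime p"
  shows "\<bar>(\<Sum>k\<le>i. binomial_weight i a k * (if \<forall>p\<in>A. \<not> p ^ b dvd (i - k) then 1 else 0))
            - (\<Prod>p\<in>A. 1 - 1 / real p ^ b)\<bar> \<le> 2 ^ card A * (equidist_const a / sqrt (real i))"
proof -
  let ?m = "\<lambda>S. (\<Prod>S) ^ b"
  let ?T = "\<lambda>S. (\<Sum>k\<le>i. binomial_weight i a k * (if ?m S dvd (i - k) then 1 else 0))"
  have "(\<Sum>k\<le>i. binomial_weight i a k * (if \<forall>p\<in>A. \<not> p ^ b dvd (i - k) then 1 else 0)) =
          (\<Sum>k\<le>i. binomial_weight i a k * (\<Sum>S\<in>Pow A. (-1) ^ card S * (if ?m S dvd (i - k) then 1 else 0)))"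
    by (simp only: indicator_no_prime_power_dvd_expand[OF assms(4,5)])
  also have "\<dots> = (\<Sum>S\<in>Pow A. (-1) ^ card S * ?T S)"
    by (simp add: sum_distrib_left sum.swap[of _ "Pow A"] mult.left_commute)
  finally have "(\<Sum>k\<le>i. binomial_weight i a k * (if \<forall>p\<in>A. \<not> p ^ b dvd (i - k) then 1 else 0))
      - (\<Prod>p\<in>A. 1 - 1 / real p ^ b) = (\<Sum>S\<in>Pow A. (-1) ^ card S * (?T S - 1 / real (?m S)))"
    unfolding prod_one_minus_inverse_power_expand[OF assms(4)] by (simp add: sum_subtractf right_diff_distrib)
  also have "\<bar>\<dots>\<bar> \<le> (\<Sum>S\<in>Pow A. equidist_const a / sqrt (real i))"
  proof (rule order.trans[OF sum_abs sum_mono])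
    fix S assume "S \<in> Pow A"
    then have m0: "?m S > 0"
      using assms by (auto simp: prime_gt_0_nat intro!: prod_pos)
    have T: "?T S = residue_prob i a (?m S) i"
      unfolding residue_prob_def
    proof (intro sum.cong refl)
      fix k assume "k \<in> {..i}"
      then have "?m S dvd i - k \<longleftrightarrow> k mod ?m S = i mod ?m S"
        using mod_eq_dvd_iff_nat[of k i "?m S"] by auto
      then show "binomial_weight i a k * (if ?m S dvd i - k then 1 else 0) =
          binomial_weight i a k * (if k mod ?m S = i mod ?m S then 1 else 0)"
        by simp
    qed
    have "\<bar>?T S - 1 / real (?m S)\<bar> \<le> equidist_const a / sqrt (real i)"
      unfolding T by (rule residue_prob_approx[OF assms(1-3) m0])
    then show "\<bar>(-1) ^ card S * (?T S - 1 / real (?m S))\<bar> \<le> equidist_const a / sqrt (real i)"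
      by (simp add: abs_mult)
  qed
  also have "\<dots> = 2 ^ card A * (equidist_const a / sqrt (real i))"
    using assms by (simp add: card_Pow)
  finally show ?thesis .
qed

lemma abs_sum_binomial_weight_diff_le_boundary:
  fixes f h :: "nat \<Rightarrow> real"
  assumes "0 \<le> a" "a \<le> 1" and inner: "\<And>k. 0 < k \<Longrightarrow> k < i \<Longrightarrow> f k = h k"
    and bounded: "\<And>k. \<bar>f k - h k\<bar> \<le> 1"
  shows "\<bar>(\<Sum>k\<le>i. binomial_weight i a k * f k) - (\<Sum>k\<le>i. binomial_weight i a k * h k)\<bar> \<le> a ^ i + (1 - a) ^ i"
proof -
  have "\<bar>binomial_weight i a k * (f k - h k)\<bar> \<le>
          binomial_weight i a k * ((if k = 0 then 1 else 0) + (if k = i then 1 else 0))" if "k \<le> i" for k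
  proof -
    have "\<bar>f k - h k\<bar> \<le> (if k = 0 then 1 else 0) + (if k = i then 1 else 0)"
      using inner[of k] bounded[of k] that by (cases "k = 0 \<or> k = i") auto
    then show ?thesis
      using binomial_weight_nonneg[OF assms(1,2), of i k] by (simp add: abs_mult mult_left_mono)
  qed
  then have "\<bar>\<Sum>k\<le>i. binomial_weight i a k * (f k - h k)\<bar> \<le>
               (\<Sum>k\<le>i. binomial_weight i a k * ((if k = 0 then 1 else 0) + (if k = i then 1 else 0)))"
    by (intro order.trans[OF sum_abs sum_mono]) auto
  also have "\<dots> = binomial_weight i a 0 + binomial_weight i a i"
    by (simp add: distrib_left sum.distrib if_distrib[of "\<lambda>x. binomial_weight i a _ * x"] cong: if_cong)
  also have "\<dots> = (1 - a) ^ i + a ^ i"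
    by (simp add: binomial_weight_def)
  finally show ?thesis
    by (simp add: sum_subtractf right_diff_distrib)
qed

text \<open>The divisibility criterion fails only at \<open>k = 0\<close> and \<open>k = i\<close>, where the walk lies on an
  axis; these events have probability \<open>(1 - a) ^ i\<close> and \<open>a ^ i\<close>.\<close>

lemma expectation_visible_indicator_approx:
  assumes "b1 \<ge> 1" "coprime b1 b2" "b1 \<le> b2" "0 < a" "a < 1" "i \<ge> 1"
  shows "\<bar>measure_pmf.expectation (binomial_pmf i a) (visible_indicator b1 b2 i)
            - (\<Prod>p\<in>{p. prime p \<and> p ^ b1 dvd i}. 1 - 1 / real p ^ b2)\<bar>
         \<le> 2 ^ card {p. prime p \<and> p ^ b1 dvd i} * (equidist_const a / sqrt (real i)) + a ^ i + (1 - a) ^ i"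
proof -
  define A where "A = {p. prime p \<and> p ^ b1 dvd i}"
  define avoid where "avoid k = (if \<forall>p\<in>A. \<not> p ^ b2 dvd (i - k) then 1 else 0 :: real)" for k
  have "\<bar>(\<Sum>k\<le>i. binomial_weight i a k * visible_indicator b1 b2 i k) - (\<Sum>k\<le>i. binomial_weight i a k * avoid k)\<bar>
          \<le> a ^ i + (1 - a) ^ i"
    using assms b_visible_walk_point_iff[OF assms(1-3)]
    by (intro abs_sum_binomial_weight_diff_le_boundary) (auto simp: visible_indicator_def avoid_def A_def)
  moreover have "\<bar>(\<Sum>k\<le>i. binomial_weight i a k * avoid k) - (\<Prod>p\<in>A. 1 - 1 / real p ^ b2)\<bar>
          \<le> 2 ^ card A * (equidist_const a / sqrt (real i))"
    unfolding avoid_def A_def using assms finite_prime_power_divisors[OF assms(1,6)]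
    by (intro sum_binomial_weight_avoid_approx) auto
  ultimately show ?thesis
    using assms by (simp add: expectation_binomial_pmf_eq_sum A_def)
qed

lemma abs_expectation_visible_indicator_le:
  assumes "0 \<le> a" "a \<le> 1"
  shows "\<bar>measure_pmf.expectation (binomial_pmf i a) (visible_indicator b1 b2 i)\<bar> \<le> 1"
proof -
  have "0 \<le> (\<Sum>k\<le>i. binomial_weight i a k * visible_indicator b1 b2 i k)"
    using assms by (intro sum_nonneg mult_nonneg_nonneg binomial_weight_nonneg) (auto simp: visible_indicator_def)
  moreover have "(\<Sum>k\<le>i. binomial_weight i a k * visible_indicator b1 b2 i k) \<le> (\<Sum>k\<le>i. binomial_weight i a k)"
    using assms by (intro sum_mono) (auto simp: visible_indicator_def binomial_weight_nonneg)
  ultimately show ?thesis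
    using assms by (simp add: expectation_binomial_pmf_eq_sum sum_binomial_weight)
qed

lemma expectation_Y_approx:
  assumes "b1 \<ge> 1" "coprime b1 b2" "b1 \<le> b2" "1 \<le> i" "i \<le> n"
    and \<alpha>: "\<forall>j<r. 0 < \<alpha> j \<and> \<alpha> j < 1"
  shows "\<bar>measure_pmf.expectation (walks_pmf \<alpha> r n) (\<lambda>\<omega>. Y b1 b2 r \<omega> i) - visible_density b1 b2 r i\<bar>
     \<le> (\<Sum>j<r. 2 ^ card {p. prime p \<and> p ^ b1 dvd i} * (equidist_const (\<alpha> j) / sqrt (real i))
              + \<alpha> j ^ i + (1 - \<alpha> j) ^ i)"
proof -
  define A where "A = {p. prime p \<and> p ^ b1 dvd i}"
  define h where "h = (\<Prod>p\<in>A. 1 - 1 / real p ^ b2)"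
  have "0 \<le> 1 - 1 / real p ^ b2 \<and> 1 - 1 / real p ^ b2 \<le> 1" if "p \<in> A" for p
    using that prime_gt_0_nat[of p] unfolding A_def by (simp add: Suc_le_eq)
  then have "\<bar>h\<bar> \<le> 1"
    unfolding h_def by (simp add: abs_prod prod_le_1 abs_le_iff prod_nonneg)
  have "visible_density b1 b2 r i = (\<Prod>j<r. h)"
    unfolding visible_density_def local_prob_def h_def A_def by (simp add: prod_power_distrib)
  then have "\<bar>measure_pmf.expectation (walks_pmf \<alpha> r n) (\<lambda>\<omega>. Y b1 b2 r \<omega> i) - visible_density b1 b2 r i\<bar> =
      \<bar>(\<Prod>j<r. measure_pmf.expectation (binomial_pmf i (\<alpha> j)) (visible_indicator b1 b2 i)) - (\<Prod>j<r. h)\<bar>"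
    using assms by (simp add: expectation_Y less_imp_le)
  also have "\<dots> \<le> (\<Sum>j<r. \<bar>measure_pmf.expectation (binomial_pmf i (\<alpha> j)) (visible_indicator b1 b2 i) - h\<bar>)"
    using \<open>\<bar>h\<bar> \<le> 1\<close> \<alpha> norm_prod_diff[of "{..<r}" "\<lambda>j. measure_pmf.expectation (binomial_pmf i (\<alpha> j)) (visible_indicator b1 b2 i)" "\<lambda>_. h"]
    by (simp add: abs_expectation_visible_indicator_le less_imp_le del: prod_constant)
  also have "\<dots> \<le> (\<Sum>j<r. 2 ^ card A * (equidist_const (\<alpha> j) / sqrt (real i)) + \<alpha> j ^ i + (1 - \<alpha> j) ^ i)"
    unfolding h_def A_def using assms by (intro sum_mono expectation_visible_indicator_approx) auto
  finally show ?thesis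
    unfolding A_def .
qed

lemma sum_abs_expectation_Y_minus_density_le:
  assumes "b1 \<ge> 1" "coprime b1 b2" "b1 \<le> b2"
    and \<alpha>: "\<forall>j<r. 0 < \<alpha> j \<and> \<alpha> j < 1" and "e > 0"
  shows "(\<Sum>i=1..n. \<bar>measure_pmf.expectation (walks_pmf \<alpha> r n) (\<lambda>\<omega>. Y b1 b2 r \<omega> i) - visible_density b1 b2 r i\<bar>)
     \<le> 2 ^ nat \<lceil>2 powr (1 / e)\<rceil> * (\<Sum>j<r. equidist_const (\<alpha> j)) * (real n powr e * (2 * sqrt (real n)))
       + (\<Sum>j<r. 1 / (1 - \<alpha> j) + 1 / \<alpha> j)"
proof -
  define C :: real where "C = 2 ^ nat \<lceil>2 powr (1 / e)\<rceil>"
  let ?K = "\<lambda>j. equidist_const (\<alpha> j)"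
  have K: "?K j \<ge> 0" if "j < r" for j
    using \<alpha> that by (simp add: equidist_const_nonneg)
  have "(\<Sum>i=1..n. \<bar>measure_pmf.expectation (walks_pmf \<alpha> r n) (\<lambda>\<omega>. Y b1 b2 r \<omega> i) - visible_density b1 b2 r i\<bar>)
     \<le> (\<Sum>i=1..n. \<Sum>j<r. 2 ^ card {p. prime p \<and> p ^ b1 dvd i} * (?K j / sqrt (real i)) + \<alpha> j ^ i + (1 - \<alpha> j) ^ i)"
    using assms by (intro sum_mono expectation_Y_approx) auto
  also have "\<dots> \<le> (\<Sum>i=1..n. \<Sum>j<r. C * real n powr e * ?K j * (1 / sqrt (real i)) + \<alpha> j ^ i + (1 - \<alpha> j) ^ i)"
  proof (intro sum_mono add_mono order.refl)
    fix i j assume "i \<in> {1..n}" "j \<in> {..<r}"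
    then have "2 ^ card {p. prime p \<and> p ^ b1 dvd i} * (?K j / sqrt (real i)) \<le> (C * real n powr e) * (?K j / sqrt (real i))"
      unfolding C_def using assms K by (intro mult_right_mono two_pow_card_prime_power_divisors_le) auto
    then show "2 ^ card {p. prime p \<and> p ^ b1 dvd i} * (?K j / sqrt (real i)) \<le> C * real n powr e * ?K j * (1 / sqrt (real i))"
      by simp
  qed
  also have "\<dots> = (\<Sum>j<r. C * real n powr e * ?K j * (\<Sum>i=1..n. 1 / sqrt (real i))
                              + (\<Sum>i=1..n. \<alpha> j ^ i) + (\<Sum>i=1..n. (1 - \<alpha> j) ^ i))"
    by (subst sum.swap) (simp add: sum.distrib sum_distrib_left)
  also have "\<dots> \<le> (\<Sum>j<r. C * real n powr e * ?K j * (2 * sqrt (real n)) + 1 / (1 - \<alpha> j) + 1 / (1 - (1 - \<alpha> j)))"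
  proof (intro sum_mono add_mono mult_left_mono sum_inverse_sqrt_le less_imp_le[OF geometric_sum_less])
    fix j assume "j \<in> {..<r}"
    then show "0 \<le> C * real n powr e * ?K j"
      unfolding C_def using K by simp
  qed (use \<alpha> in auto)
  also have "\<dots> = C * (\<Sum>j<r. ?K j) * (real n powr e * (2 * sqrt (real n))) + (\<Sum>j<r. 1 / (1 - \<alpha> j) + 1 / \<alpha> j)"
    by (simp add: sum.distrib sum_distrib_left sum_distrib_right algebra_simps)
  finally show ?thesis
    unfolding C_def .
qed

lemma abs_average_expectation_Y_minus_density_le:
  assumes "b1 \<ge> 1" "coprime b1 b2" "b1 \<le> b2" and \<alpha>: "\<forall>j<r. 0 < \<alpha> j \<and> \<alpha> j < 1"
    and "e > 0" "n \<ge> 1"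
  shows "\<bar>(\<Sum>i=1..n. measure_pmf.expectation (walks_pmf \<alpha> r n) (\<lambda>\<omega>. Y b1 b2 r \<omega> i) - visible_density b1 b2 r i)
            / real n\<bar>
     \<le> (2 * (2 ^ nat \<lceil>2 powr (1 / e)\<rceil> * (\<Sum>j<r. equidist_const (\<alpha> j))) + (\<Sum>j<r. 1 / (1 - \<alpha> j) + 1 / \<alpha> j))
         * real n powr (-1/2 + e)"
proof -
  define A where "A = 2 ^ nat \<lceil>2 powr (1 / e)\<rceil> * (\<Sum>j<r. equidist_const (\<alpha> j))"
  define B where "B = (\<Sum>j<r. 1 / (1 - \<alpha> j) + 1 / \<alpha> j)"
  define P where "P = real n powr (-1/2 + e)"
  have "B \<ge> 0"
    unfolding B_def using \<alpha> by (auto intro!: sum_nonneg)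
  have "\<bar>(\<Sum>i=1..n. measure_pmf.expectation (walks_pmf \<alpha> r n) (\<lambda>\<omega>. Y b1 b2 r \<omega> i) - visible_density b1 b2 r i)
            / real n\<bar> \<le> (A * (real n powr e * (2 * sqrt (real n))) + B) / real n"
    unfolding abs_divide abs_of_nat A_def B_def using assms
    by (intro divide_right_mono order.trans[OF sum_abs sum_abs_expectation_Y_minus_density_le]) auto
  also have "\<dots> = A * (real n powr e * (2 * sqrt (real n)) / real n) + B * (1 / real n)"
    by (simp add: add_divide_distrib)
  also have "\<dots> \<le> 2 * A * P + B * P"
    using mult_left_mono[OF inverse_le_powr[OF assms(6,5)] \<open>B \<ge> 0\<close>]
    unfolding powr_mult_sqrt_div[OF assms(6)] P_def by simp
  finally show ?thesis
    unfolding A_def B_def P_def by (simp add: distrib_right)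
qed

lemma expectation_Rbar_approx:
  assumes "b1 \<ge> 1" "coprime b1 b2" "b1 \<le> b2" and \<alpha>: "\<forall>j<r. 0 < \<alpha> j \<and> \<alpha> j < 1" and "e > 0"
  obtains K where "\<And>n. n \<ge> 1 \<Longrightarrow>
    \<bar>measure_pmf.expectation (walks_pmf \<alpha> r n) (Rbar b1 b2 r n) - prodinf (euler_factor b1 b2 r)\<bar>
      \<le> K * real n powr (-1/2 + e)"
proof -
  have "b2 \<ge> 1"
    using assms by simp
  define A where "A = 2 * (2 ^ nat \<lceil>2 powr (1 / e)\<rceil> * (\<Sum>j<r. equidist_const (\<alpha> j)))
                        + (\<Sum>j<r. 1 / (1 - \<alpha> j) + 1 / \<alpha> j)"
  define Z where "Z = exp (real r * (\<Sum>m. real m powr (-3/2)))"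
  have "\<bar>measure_pmf.expectation (walks_pmf \<alpha> r n) (Rbar b1 b2 r n) - prodinf (euler_factor b1 b2 r)\<bar>
          \<le> (A + Z + real r) * real n powr (-1/2 + e)" if "n \<ge> 1" for n
  proof -
    let ?EY = "\<lambda>i. measure_pmf.expectation (walks_pmf \<alpha> r n) (\<lambda>\<omega>. Y b1 b2 r \<omega> i)"
    let ?g = "visible_density b1 b2 r"
    define P where "P = real n powr (-1/2 + e)"
    have t1: "\<bar>(\<Sum>i=1..n. ?EY i - ?g i) / real n\<bar> \<le> A * P"
      unfolding A_def P_def using assms that by (rule abs_average_expectation_Y_minus_density_le)
    have "\<bar>(\<Sum>i=1..n. ?g i) / real n - partial_euler_product b1 b2 r n\<bar> \<le> Z * (1 / sqrt (real n))"
      using average_visible_density_approx[OF assms(1) \<open>b2 \<ge> 1\<close> that, of r] unfolding Z_def by simp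
    also have "\<dots> \<le> Z * P"
      unfolding Z_def P_def using that \<open>e > 0\<close> by (intro mult_left_mono inverse_sqrt_le_powr) auto
    finally have t2: "\<bar>(\<Sum>i=1..n. ?g i) / real n - partial_euler_product b1 b2 r n\<bar> \<le> Z * P" .
    have "\<bar>partial_euler_product b1 b2 r n - prodinf (euler_factor b1 b2 r)\<bar> \<le> real r * (1 / real n)"
      using partial_euler_product_approx[OF assms(1) \<open>b2 \<ge> 1\<close> that, of r] by simp
    also have "\<dots> \<le> real r * P"
      unfolding P_def using that \<open>e > 0\<close> by (intro mult_left_mono inverse_le_powr) auto
    finally have t3: "\<bar>partial_euler_product b1 b2 r n - prodinf (euler_factor b1 b2 r)\<bar> \<le> real r * P" .
    have "measure_pmf.expectation (walks_pmf \<alpha> r n) (Rbar b1 b2 r n) - prodinf (euler_factor b1 b2 r) =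
        (\<Sum>i=1..n. ?EY i - ?g i) / real n + ((\<Sum>i=1..n. ?g i) / real n - partial_euler_product b1 b2 r n)
        + (partial_euler_product b1 b2 r n - prodinf (euler_factor b1 b2 r))"
      unfolding expectation_Rbar sum_subtractf by (simp add: diff_divide_distrib)
    moreover have "(A + Z + real r) * P = A * P + Z * P + real r * P"
      by (simp add: distrib_right)
    ultimately show ?thesis
      using t1 t2 t3 unfolding P_def[symmetric] by linarith
  qed
  then show ?thesis
    by (rule that)
qed

theorem proposition4p1:
  fixes b1 b2 r :: nat and \<alpha> :: "nat \<Rightarrow> real" and \<epsilon> :: real
  assumes "b1 \<ge> 1" and "coprime b1 b2" and "b1 \<le> b2" and "r \<ge> 1"
    and "\<forall>j<r. 0 < \<alpha> j \<and> \<alpha> j < 1" and "\<epsilon> > 0"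
  shows "(\<lambda>n. measure_pmf.expectation (walks_pmf \<alpha> r n) (Rbar b1 b2 r n)
            - (\<Prod>p. if prime p then 1 - 1 / real p ^ b1 + 1 / real p ^ b1 * (1 - 1 / real p ^ b2) ^ r
                     else 1))
         \<in> O(\<lambda>n. real n powr (-1/2 + \<epsilon>))"
proof -
  have "(\<lambda>p. if prime p then 1 - 1 / real p ^ b1 + 1 / real p ^ b1 * (1 - 1 / real p ^ b2) ^ r else 1)
          = euler_factor b1 b2 r"
    by (rule ext) (simp add: euler_factor_def local_prob_def diff_divide_distrib)
  moreover obtain K where "\<And>n. n \<ge> 1 \<Longrightarrow>
      \<bar>measure_pmf.expectation (walks_pmf \<alpha> r n) (Rbar b1 b2 r n) - prodinf (euler_factor b1 b2 r)\<bar>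
        \<le> K * real n powr (-1/2 + \<epsilon>)"
    using expectation_Rbar_approx[OF assms(1-3,5,6)] by blast
  then have "\<forall>\<^sub>F n in at_top. norm (measure_pmf.expectation (walks_pmf \<alpha> r n) (Rbar b1 b2 r n)
               - prodinf (euler_factor b1 b2 r)) \<le> K * norm (real n powr (-1/2 + \<epsilon>))"
    unfolding eventually_at_top_linorder by (intro exI[of _ 1]) auto
  ultimately show ?thesis
    by (auto intro: bigoI)
qed

end
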